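(* Let the setting, algorithm and notation be as described in the context, suppose the constraint qualification holds and the optimization problem has a nonempty solution set. Assume $\tau\in(0,(1+\sqrt5)/2)$ and that for some $\alpha\in(\tau/\min(1+\tau,1+\tau^{-1}),1]$, \[ \widehat\Sigma_f+S\succeq0,\quad H_f\succeq0,\quad \tfrac12\Sigma_f+S+\sigma AA^*\succ0,\quad \tfrac12\widehat\Sigma_g+T\succeq0,\quad M_g\succ0 . \] Then the Majorized iPADMM has a worst-case $O(1/k)$ ergodic iteration-complexity, in the following sense: there is a constant $D\ge0$ independent of $k$ such that for every $k\ge2$, the ergodic point $\hat w^k:=(\hat x^k,\hat y^k,\hat z^k)$ satisfies \[ \big(p(\hat x^k)+q(\hat y^k)\big)-\big(p(x)+q(y)\big)+\langle\hat x^k-x,\nabla f(x)+Az\rangle+\langle\hat y^k-y,\nabla g(y)+Bz\rangle+\langle\hat z^k-z,-(A^*x+B^*y-c)\rangle\le\frac{D}{2k} \] for all $w=(x,y,z)\in\mathcal X\times\mathcal Y\times\mathcal Z$ with $\|w-\hat w^k\|\le1$; i.e. $\hat w^k$ is an $O(1/k)$-approximate solution of the associated variational inequality.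
   Context: Let $\mathcal X,\mathcal Y,\mathcal Z$ be finite-dimensional real Euclidean spaces with inner products $\langle\cdot,\cdot\rangle$ and induced norms $\|\cdot\|$; on $\mathcal X\times\mathcal Y\times\mathcal Z$ use the product Euclidean norm. Let $p:\mathcal X\to(-\infty,+\infty]$ and $q:\mathcal Y\to(-\infty,+\infty]$ be closed proper convex functions, and let $f:\mathcal X\to\mathbb R$, $g:\mathcal Y\to\mathbb R$ be convex differentiable functions with Lipschitz continuous gradients. Let $A:\mathcal Z\to\mathcal X$, $B:\mathcal Z\to\mathcal Y$ be linear maps with adjoints $A^*,B^*$, and $c\in\mathcal Z$. The optimization problem is $\min_{x,y}\{p(x)+f(x)+q(y)+g(y): A^*x+B^*y=c\}$. Constraint qualification: there is $(x_0,y_0)\in\mathrm{ri}(\mathrm{dom}(p)\times\mathrm{dom}(q))$ with $A^*x_0+B^*y_0=c$. Let $\Sigma_f,\widehat\Sigma_f$ (on $\mathcal X$) and $\Sigma_g,\widehat\Sigma_g$ (on $\mathcal Y$) be self-adjoint positive semidefinite linear operators with $\widehat\Sigma_f\succeq\Sigma_f$, $\widehat\Sigma_g\succeq\Sigma_g$, such that for all $x,x'\in\mathcal X$, $y,y'\in\mathcal Y$: $f(x')+\langle x-x',\nabla f(x')\rangle+\frac12\|x-x'\|^2_{\Sigma_f}\le f(x)\le f(x')+\langle x-x',\nabla f(x')\rangle+\frac12\|x-x'\|^2_{\widehat\Sigma_f}$ and the analogous two inequalities for $g$ with $\Sigma_g,\widehat\Sigma_g$. For a self-adjoint (possibly indefinite)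 operator $G$, $\|u\|_G^2:=\langle u,Gu\rangle$. Algorithm (Majorized iPADMM): let $\sigma>0$, $\tau>0$, and let $S:\mathcal X\to\mathcal X$, $T:\mathcal Y\to\mathcal Y$ be self-adjoint, possibly indefinite, linear operators with $\widehat\Sigma_f+S+\sigma AA^*\succeq0$ and $\widehat\Sigma_g+T+\sigma BB^*\succeq0$. Starting from $(x^0,y^0,z^0)\in\mathrm{dom}(p)\times\mathrm{dom}(q)\times\mathcal Z$, for $k=0,1,\dots$: $x^{k+1}\in\arg\min_{x}\{p(x)+\langle\nabla f(x^k),x\rangle+\frac12\|x-x^k\|^2_{\widehat\Sigma_f+S}+\langle z^k,A^*x\rangle+\frac\sigma2\|A^*x+B^*y^k-c\|^2\}$, $y^{k+1}\in\arg\min_{y}\{q(y)+\langle\nabla g(y^k),y\rangle+\frac12\|y-y^k\|^2_{\widehat\Sigma_g+T}+\langle z^k,B^*y\rangle+\frac\sigma2\|A^*x^{k+1}+B^*y-c\|^2\}$, $z^{k+1}=z^k+\tau\sigma(A^*x^{k+1}+B^*y^{k+1}-c)$ (the minimizers are assumed to exist). Notation: $\tilde z^{i+1}:=z^i+\sigma(A^*x^{i+1}+B^*y^{i+1}-c)$; ergodic averages $\hat x^k:=\frac1k\sum_{i=1}^k x^{i+1}$, $\hat y^k:=\frac1k\sum_{i=1}^k y^{i+1}$, $\hat z^k:=\frac1k\sum_{i=1}^k\tilde z^{i+1}$; for $\alpha\in(0,1]$, $H_f:=\frac12\Sigma_f+S+\frac12(1-\alpha)\sigma AA^*$ and $M_g:=\frac12\Sigma_g+T+\min(\tau,1+\tau-\tau^2)\alpha\sigma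 BB^*$. *)

theory Defs
  imports "HOL-Analysis.Analysis" "HOL-Library.Extended_Real"
begin

definition epigraph_e :: "('a::real_normed_vector \<Rightarrow> ereal) \<Rightarrow> ('a \<times> real) set" where
  "epigraph_e p = {(x, t). p x \<le> ereal t}"

definition edom :: "('a \<Rightarrow> ereal) \<Rightarrow> 'a set" where
  "edom p = {x. p x < \<infinity>}"

definition closed_proper_convex :: "('a::real_normed_vector \<Rightarrow> ereal) \<Rightarrow> bool" where
  "closed_proper_convex p \<longleftrightarrow>
     closed (epigraph_e p) \<and> convex (epigraph_e p) \<and>
     (\<forall>x. p x \<noteq> -\<infinity>) \<and> (\<exists>x. p x \<noteq> \<infinity>)"

definition self_adjoint_op :: "('a::real_inner \<Rightarrow> 'a) \<Rightarrow> bool" where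
  "self_adjoint_op G \<longleftrightarrow> linear G \<and> (\<forall>u v. G u \<bullet> v = u \<bullet> G v)"

definition qnorm :: "('a::real_inner \<Rightarrow> 'a) \<Rightarrow> 'a \<Rightarrow> real" where
  "qnorm G u = u \<bullet> G u"

definition psd_op :: "('a::real_inner \<Rightarrow> 'a) \<Rightarrow> bool" where
  "psd_op G \<longleftrightarrow> (\<forall>u. 0 \<le> qnorm G u)"

definition pd_op :: "('a::real_inner \<Rightarrow> 'a) \<Rightarrow> bool" where
  "pd_op G \<longleftrightarrow> (\<forall>u. u \<noteq> 0 \<longrightarrow> 0 < qnorm G u)"

end

theory Submission
  imports Defs
begin

(* Each iteration satisfies the one-step estimate
     Gap (j+1) w <= Psi j w - Psi (j+1) w,
   where the gap is the variational-inequality residual of (x^{j+2}, y^{j+2}, z~^{j+2}) against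
   the test point w, and Psi j w collects |z^{j+1} - w|^2 / (2 tau sigma), the proximal distances of
   x^{j+1} and y^{j+1} to w, and residual terms.  The hypotheses on H_f and M_g are exactly what
   makes the indefinite proximal terms and the cross terms between consecutive residuals
   harmless.  Telescoping and Jensen's inequality bound the ergodic gap by Psi 0 w / k.
   Evaluated at a KKT point (which exists by the constraint qualification) Psi is nonincreasing,
   and positive definiteness turns this into boundedness of the iterates; so the ergodic points,
   and the test points within distance 1 of them, stay in a fixed ball on which Psi 0 is bounded. *)

section \<open>Quadratic forms of self-adjoint operators\<close>

lemma self_adjoint_op_linear: "self_adjoint_op G \<Longrightarrow> linear G"
  by (simp add: self_adjoint_op_def)

lemma self_adjoint_op_inner: "self_adjoint_op G \<Longrightarrow> a \<bullet> G b = b \<bullet> G a"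
  by (simp add: self_adjoint_op_def inner_commute)

lemma self_adjoint_op_add:
  "self_adjoint_op F \<Longrightarrow> self_adjoint_op H \<Longrightarrow> self_adjoint_op (\<lambda>u. F u + H u)"
  unfolding self_adjoint_op_def by (auto simp: linear_compose_add inner_add_left inner_add_right)

lemma qnorm_add:
  assumes "self_adjoint_op G"
  shows "qnorm G (a + b) = qnorm G a + 2 * (a \<bullet> G b) + qnorm G b"
  using self_adjoint_op_inner[OF assms, of b a]
  by (simp add: qnorm_def linear_add[OF self_adjoint_op_linear[OF assms]] inner_add_left inner_add_right)

lemma qnorm_diff:
  assumes "self_adjoint_op G"
  shows "qnorm G (a - b) = qnorm G a - 2 * (a \<bullet> G b) + qnorm G b"
  using self_adjoint_op_inner[OF assms, of b a]
  by (simp add: qnorm_def linear_diff[OF self_adjoint_op_linear[OF assms]] inner_diff_left inner_diff_right)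

lemma qnorm_scaleR: "linear G \<Longrightarrow> qnorm G (t *\<^sub>R a) = t\<^sup>2 * qnorm G a"
  by (simp add: qnorm_def linear_scale power2_eq_square)

lemma qnorm_minus_commute: "linear G \<Longrightarrow> qnorm G (a - b) = qnorm G (b - a)"
  using qnorm_scaleR[of G "-1" "b - a"] by simp

lemma qnorm_op_add: "qnorm (\<lambda>u. F u + H u) d = qnorm F d + qnorm H d"
  by (simp add: qnorm_def inner_add_right)

lemma qnorm_op_diff: "qnorm (\<lambda>u. F u - H u) d = qnorm F d - qnorm H d"
  by (simp add: qnorm_def inner_diff_right)

lemma qnorm_op_scaleR: "qnorm (\<lambda>u. t *\<^sub>R F u) d = t * qnorm F d"
  by (simp add: qnorm_def)

lemma qnorm_adjoint_comp:
  fixes A :: "'c::euclidean_space \<Rightarrow> 'a::euclidean_space"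
  assumes "linear A"
  shows "qnorm (\<lambda>u. A (adjoint A u)) d = (norm (adjoint A d))\<^sup>2"
  using adjoint_clauses(2)[OF assms, of d "adjoint A d"] by (simp add: qnorm_def power2_norm_eq_inner)

lemma inner_op_eq_qnorm_diff:
  assumes "self_adjoint_op G"
  shows "a \<bullet> G b = (qnorm G (a + b) - qnorm G a - qnorm G b) / 2"
  using qnorm_add[OF assms, of a b] by simp

lemma qnorm_add_le:
  assumes "self_adjoint_op G" "psd_op G"
  shows "qnorm G (a + b) \<le> 2 * qnorm G a + 2 * qnorm G b"
  using qnorm_add[OF assms(1), of a b] qnorm_diff[OF assms(1), of a b] assms(2)[unfolded psd_op_def]
  by (smt (verit))

lemma psd_op_le: "psd_op (\<lambda>u. H u - F u) \<Longrightarrow> qnorm F d \<le> qnorm H d"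
  unfolding psd_op_def by (metis qnorm_op_diff diff_ge_0_iff_ge)

lemma pd_op_imp_psd_op: "pd_op G \<Longrightarrow> psd_op G"
  unfolding pd_op_def psd_op_def qnorm_def by (metis inner_zero_left order.refl less_imp_le)

lemma pd_op_coercive:
  fixes G :: "'a::euclidean_space \<Rightarrow> 'a"
  assumes lin: "linear G" and pd: "pd_op G"
  obtains \<kappa> where "\<kappa> > 0" "\<And>d. \<kappa> * (norm d)\<^sup>2 \<le> qnorm G d"
proof -
  have cont: "continuous_on (sphere 0 1) (qnorm G)"
    unfolding qnorm_def using lin
    by (intro continuous_intros linear_continuous_on) (simp add: linear_conv_bounded_linear)
  obtain e :: 'a where "e \<in> Basis" using nonempty_Basis by blast
  then have "sphere (0::'a) 1 \<noteq> {}" by (metis norm_Basis mem_sphere_0 empty_iff)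
  then obtain d0 where d0: "d0 \<in> sphere 0 1" "\<And>d. d \<in> sphere 0 1 \<Longrightarrow> qnorm G d0 \<le> qnorm G d"
    using continuous_attains_inf[OF compact_sphere _ cont] by blast
  show ?thesis
  proof (rule that)
    show "qnorm G d0 > 0" using pd d0(1) by (metis pd_op_def mem_sphere_0 norm_zero zero_neq_one)
    fix d :: 'a
    show "qnorm G d0 * (norm d)\<^sup>2 \<le> qnorm G d"
    proof (cases "d = 0")
      case True then show ?thesis by (simp add: qnorm_def linear_0[OF lin])
    next
      case False
      have "qnorm G d0 \<le> qnorm G ((1 / norm d) *\<^sub>R d)" using False by (intro d0(2)) simp
      also have "\<dots> = qnorm G d / (norm d)\<^sup>2" by (simp add: qnorm_scaleR[OF lin] power_divide)
      finally show ?thesis using False by (simp add: field_simps)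
    qed
  qed
qed

section \<open>Norms, averages and bounded sequences\<close>

lemma power2_norm_add: "(norm (a + b))\<^sup>2 = (norm a)\<^sup>2 + 2 * (a \<bullet> b) + (norm (b::'a::real_inner))\<^sup>2"
  by (simp add: power2_norm_eq_inner inner_add_left inner_add_right inner_commute)

lemma power2_norm_diff: "(norm (a - b))\<^sup>2 = (norm a)\<^sup>2 - 2 * (a \<bullet> b) + (norm (b::'a::real_inner))\<^sup>2"
  by (simp add: power2_norm_eq_inner inner_diff_left inner_diff_right inner_commute)

lemma power2_norm_diff_le: "(norm (a - b))\<^sup>2 \<le> 2 * (norm a)\<^sup>2 + 2 * (norm (b::'a::real_inner))\<^sup>2"
  using power2_norm_add[of a b] power2_norm_diff[of a b] zero_le_power2[of "norm (a + b)"] by linarith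

lemma inner_diff_diff_eq_power2_norms:
  fixes u v s t c :: "'a::real_inner"
  shows "2 * ((u - v) \<bullet> (s - t))
    = (norm (u + s - c))\<^sup>2 - (norm (u + t - c))\<^sup>2 - (norm (v + s - c))\<^sup>2 + (norm (v + t - c))\<^sup>2"
  by (simp add: power2_norm_eq_inner inner_commute algebra_simps)

lemma inner_quadratic_form_nonneg:
  fixes r b :: "'a::real_inner"
  assumes "0 < D" "\<beta>\<^sup>2 \<le> D * C"
  shows "0 \<le> D * (norm r)\<^sup>2 + 2 * \<beta> * (r \<bullet> b) + C * (norm b)\<^sup>2"
proof -
  have "D * (D * (norm r)\<^sup>2 + 2 * \<beta> * (r \<bullet> b) + C * (norm b)\<^sup>2)
      = (norm (D *\<^sub>R r + \<beta> *\<^sub>R b))\<^sup>2 + (D * C - \<beta>\<^sup>2) * (norm b)\<^sup>2"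
    unfolding power2_norm_add by (simp add: algebra_simps power2_eq_square)
  also have "\<dots> \<ge> 0" using assms(2) by simp
  finally show ?thesis using assms(1) by (simp add: zero_le_mult_iff)
qed

lemma norm_le_one_plus_power2: "norm (d::'a::real_normed_vector) \<le> 1 + (norm d)\<^sup>2"
proof (cases "norm d \<le> 1")
  case False
  then have "norm d * 1 \<le> norm d * norm d" by (intro mult_left_mono) auto
  then show ?thesis by (simp add: power2_eq_square)
qed (simp add: add_increasing2)

lemma bounded_range_if_power2_norm_le:
  fixes a :: "nat \<Rightarrow> 'a::real_normed_vector"
  assumes "\<And>j. (norm (a j - b))\<^sup>2 \<le> K"
  shows "bounded (range a)"
proof -
  have "norm (a j) \<le> norm b + (1 + K)" for j
    using norm_triangle_sub[of "a j" b] norm_le_one_plus_power2[of "a j - b"] assms[of j]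
    by (simp add: add.commute)
  then show ?thesis unfolding bounded_iff by blast
qed

lemma bounded_range_Suc: "bounded (range (\<lambda>j. a (Suc j))) \<Longrightarrow> bounded (range a)"
  by (metis UNIV_nat_eq bounded_insert image_image image_insert)

lemma norm_average_le:
  fixes a :: "nat \<Rightarrow> 'a::real_normed_vector"
  assumes "finite I" "card I = k" "k > 0" "\<And>i. i \<in> I \<Longrightarrow> norm (a i) \<le> K"
  shows "norm ((1 / real k) *\<^sub>R (\<Sum>i\<in>I. a i)) \<le> K"
proof -
  have "norm (\<Sum>i\<in>I. a i) \<le> real k * K"
    using norm_sum[of a I] sum_bounded_above[of I "\<lambda>i. norm (a i)" K] assms by simp
  then show ?thesis using assms(3) by (simp add: field_simps)
qed

lemma inner_average_diff:
  fixes a :: "nat \<Rightarrow> 'a::real_inner"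
  assumes "finite I" "card I = k" "k > 0"
  shows "((1 / real k) *\<^sub>R (\<Sum>i\<in>I. a i) - u) \<bullet> g = (1 / real k) * (\<Sum>i\<in>I. (a i - u) \<bullet> g)"
  using assms by (simp add: inner_diff_left inner_sum_left sum_subtractf field_simps)

lemma convex_on_average:
  assumes cvx: "convex_on C f" and I: "finite I" "card I = k" "0 < k" and a: "\<And>i. i \<in> I \<Longrightarrow> a i \<in> C"
  shows "(1 / real k) *\<^sub>R (\<Sum>i\<in>I. a i) \<in> C"
    and "f ((1 / real k) *\<^sub>R (\<Sum>i\<in>I. a i)) \<le> (1 / real k) * (\<Sum>i\<in>I. f (a i))"
proof -
  have avg: "(1 / real k) *\<^sub>R (\<Sum>i\<in>I. a i) = (\<Sum>i\<in>I. (1 / real k) *\<^sub>R a i)"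
    by (simp add: scaleR_sum_right)
  have w: "(\<Sum>i\<in>I. 1 / real k) = 1" "I \<noteq> {}" using I by auto
  show "(1 / real k) *\<^sub>R (\<Sum>i\<in>I. a i) \<in> C"
    unfolding avg using convex_sum[OF I(1) convex_on_imp_convex[OF cvx] w(1)] a by simp
  show "f ((1 / real k) *\<^sub>R (\<Sum>i\<in>I. a i)) \<le> (1 / real k) * (\<Sum>i\<in>I. f (a i))"
    unfolding avg using convex_on_sum[OF I(1) w(2) cvx w(1)] a by (simp add: sum_distrib_left)
qed

section \<open>Extended-real convex functions\<close>

lemma closed_proper_convex_not_minf: "closed_proper_convex p \<Longrightarrow> p x \<noteq> -\<infinity>"
  by (simp add: closed_proper_convex_def)

lemma closed_proper_convex_finite:
  assumes "closed_proper_convex p" "x \<in> edom p"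
  shows "p x = ereal (real_of_ereal (p x))"
  using closed_proper_convex_not_minf[OF assms(1), of x] assms(2) by (cases "p x") (auto simp: edom_def)

lemma closed_proper_convex_combination:
  assumes p: "closed_proper_convex p" and "x \<in> edom p" "y \<in> edom p" "0 \<le> a" "0 \<le> b" "a + b = 1"
  shows "a *\<^sub>R x + b *\<^sub>R y \<in> edom p \<and>
    real_of_ereal (p (a *\<^sub>R x + b *\<^sub>R y)) \<le> a * real_of_ereal (p x) + b * real_of_ereal (p y)"
proof -
  let ?P = "\<lambda>x. real_of_ereal (p x)"
  have "(x, ?P x) \<in> epigraph_e p" "(y, ?P y) \<in> epigraph_e p"
    using closed_proper_convex_finite[OF p] assms(2,3) by (simp_all add: epigraph_e_def)
  then have "a *\<^sub>R (x, ?P x) + b *\<^sub>R (y, ?P y) \<in> epigraph_e p"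
    using p assms(4-6) by (intro convexD) (auto simp: closed_proper_convex_def)
  then have le: "p (a *\<^sub>R x + b *\<^sub>R y) \<le> ereal (a * ?P x + b * ?P y)" by (simp add: epigraph_e_def)
  then show ?thesis
    using closed_proper_convex_not_minf[OF p, of "a *\<^sub>R x + b *\<^sub>R y"]
    by (cases "p (a *\<^sub>R x + b *\<^sub>R y)") (auto simp: edom_def)
qed

lemma closed_proper_convex_convex_on:
  assumes "closed_proper_convex p"
  shows "convex_on (edom p) (\<lambda>x. real_of_ereal (p x))"
proof -
  have "convex (edom p)" using closed_proper_convex_combination[OF assms] by (intro convexI) blast
  then show ?thesis unfolding convex_on_def using closed_proper_convex_combination[OF assms] by blast
qed

lemma edom_if_le_finite:
  assumes "closed_proper_convex p" "p a + ereal s \<le> p b + ereal t" "b \<in> edom p"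
  shows "a \<in> edom p"
  using assms closed_proper_convex_not_minf[OF assms(1), of a] by (cases "p a"; cases "p b") (auto simp: edom_def)

lemma convex_on_Times_add:
  assumes "convex_on S \<phi>" "convex_on T \<psi>"
  shows "convex_on (S \<times> T) (\<lambda>w. \<phi> (fst w) + \<psi> (snd w))"
proof (rule convex_onI)
  show "convex (S \<times> T)" using assms by (intro convex_Times convex_on_imp_convex)
  fix t :: real and v w assume "0 < t" "t < 1" "v \<in> S \<times> T" "w \<in> S \<times> T"
  then show "\<phi> (fst ((1 - t) *\<^sub>R v + t *\<^sub>R w)) + \<psi> (snd ((1 - t) *\<^sub>R v + t *\<^sub>R w))
      \<le> (1 - t) * (\<phi> (fst v) + \<psi> (snd v)) + t * (\<phi> (fst w) + \<psi> (snd w))"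
    using convex_onD[OF assms(1), of t "fst v" "fst w"] convex_onD[OF assms(2), of t "snd v" "snd w"]
    by (auto simp: mem_Times_iff algebra_simps)
qed

section \<open>First-order optimality\<close>

lemma nonneg_if_ge_vanishing_lower_bound:
  fixes c M :: real
  assumes "\<And>t. 0 < t \<Longrightarrow> t \<le> 1 \<Longrightarrow> - (t * M) \<le> c"
  shows "0 \<le> c"
proof (rule ccontr)
  assume "\<not> 0 \<le> c"
  define K where "K = 2 * (\<bar>M\<bar> + 1)"
  define t where "t = min 1 (- c / K)"
  have K: "0 < K" by (simp add: K_def add_nonneg_pos)
  have t: "0 < t" "t \<le> 1" using \<open>\<not> 0 \<le> c\<close> K by (auto simp: t_def divide_neg_pos)
  have "t \<le> - c / K" by (simp add: t_def)
  then have "t * K \<le> - c / K * K" using K by (intro mult_right_mono) auto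
  then have "t * K \<le> - c" using K by simp
  moreover have "t * M < t * K" using t by (intro mult_strict_left_mono) (auto simp: K_def)
  ultimately show False using assms[OF t] by linarith
qed

lemma variational_ineq_of_min:
  fixes P h :: "'a::real_vector \<Rightarrow> real"
  assumes cvx: "convex_on D P" and x1: "x1 \<in> D" and u: "u \<in> D"
    and h: "\<And>t. 0 < t \<Longrightarrow> t \<le> 1 \<Longrightarrow> h (x1 + t *\<^sub>R (u - x1)) \<le> h x1 + t * L + t\<^sup>2 * M"
    and min: "\<And>v. v \<in> D \<Longrightarrow> P x1 + h x1 \<le> P v + h v"
  shows "0 \<le> P u - P x1 + L"
proof (rule nonneg_if_ge_vanishing_lower_bound[of M])
  fix t :: real assume t: "0 < t" "t \<le> 1"
  have eq: "x1 + t *\<^sub>R (u - x1) = (1 - t) *\<^sub>R x1 + t *\<^sub>R u" by (simp add: algebra_simps)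
  have "x1 + t *\<^sub>R (u - x1) \<in> D"
    unfolding eq using t x1 u convex_on_imp_convex[OF cvx] by (intro convexD) auto
  moreover have "P (x1 + t *\<^sub>R (u - x1)) \<le> (1 - t) * P x1 + t * P u"
    unfolding eq using convex_onD[OF cvx] t x1 u by auto
  ultimately have "P x1 + h x1 \<le> (1 - t) * P x1 + t * P u + (h x1 + t * L + t\<^sup>2 * M)"
    using min h[OF t] by (meson add_mono order_trans)
  moreover have "t * (P u - P x1 + L + t * M) = (1 - t) * P x1 + t * P u + (t * L + t\<^sup>2 * M) - P x1"
    by (simp add: algebra_simps power2_eq_square)
  ultimately have "0 \<le> t * (P u - P x1 + L + t * M)" by linarith
  then show "- (t * M) \<le> P u - P x1 + L" using t by (simp add: zero_le_mult_iff)
qed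

lemma quadratic_along_segment:
  assumes G: "self_adjoint_op G" and L: "linear L"
  shows "g \<bullet> (x1 + t *\<^sub>R d) + qnorm G (x1 + t *\<^sub>R d - x0) / 2 + z \<bullet> L (x1 + t *\<^sub>R d)
          + \<sigma> / 2 * (norm (L (x1 + t *\<^sub>R d) + b - c))\<^sup>2
     = (g \<bullet> x1 + qnorm G (x1 - x0) / 2 + z \<bullet> L x1 + \<sigma> / 2 * (norm (L x1 + b - c))\<^sup>2)
       + t * (g \<bullet> d + (x1 - x0) \<bullet> G d + z \<bullet> L d + \<sigma> * ((L x1 + b - c) \<bullet> L d))
       + t\<^sup>2 * (qnorm G d / 2 + \<sigma> / 2 * (norm (L d))\<^sup>2)"
proof -
  have linG: "linear G" using G by (rule self_adjoint_op_linear)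
  have e1: "x1 + t *\<^sub>R d - x0 = (x1 - x0) + t *\<^sub>R d" by (simp add: algebra_simps)
  have q: "qnorm G (x1 + t *\<^sub>R d - x0) = qnorm G (x1 - x0) + 2 * t * ((x1 - x0) \<bullet> G d) + t\<^sup>2 * qnorm G d"
    unfolding e1 qnorm_add[OF G] qnorm_scaleR[OF linG] by (simp add: linear_scale[OF linG])
  have e2: "L (x1 + t *\<^sub>R d) + b - c = (L x1 + b - c) + t *\<^sub>R L d"
    by (simp add: linear_add[OF L] linear_scale[OF L] algebra_simps)
  have n: "(norm (L (x1 + t *\<^sub>R d) + b - c))\<^sup>2
      = (norm (L x1 + b - c))\<^sup>2 + 2 * t * ((L x1 + b - c) \<bullet> L d) + t\<^sup>2 * (norm (L d))\<^sup>2"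
    unfolding e2 power2_norm_add by (simp add: power_mult_distrib)
  show ?thesis unfolding q n
    by (simp add: linear_add[OF L] linear_scale[OF L] inner_add_right algebra_simps power2_eq_square
        add_divide_distrib diff_divide_distrib)
qed

lemma variational_ineq_of_min_majorized:
  assumes cvx: "convex_on D P" and xs: "xs \<in> D" and u: "u \<in> D" and "linear Su" "linear L"
    and upper: "\<And>u v. f u \<le> f v + (u - v) \<bullet> gf v + qnorm Su (u - v) / 2"
    and min: "\<And>w. w \<in> D \<Longrightarrow> P xs + f xs + zs \<bullet> L xs \<le> P w + f w + zs \<bullet> L w"
  shows "0 \<le> P u - P xs + gf xs \<bullet> (u - xs) + zs \<bullet> L (u - xs)"
proof -
  have "0 \<le> P u - P xs + (gf xs \<bullet> (u - xs) + zs \<bullet> L (u - xs))"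
  proof (rule variational_ineq_of_min[OF cvx xs u, where h = "\<lambda>w. f w + zs \<bullet> L w" and M = "qnorm Su (u - xs) / 2"])
    fix t :: real
    have "f (xs + t *\<^sub>R (u - xs)) \<le> f xs + t * (gf xs \<bullet> (u - xs)) + t\<^sup>2 * (qnorm Su (u - xs) / 2)"
      using upper[of "xs + t *\<^sub>R (u - xs)" xs] qnorm_scaleR[OF assms(4)] by (simp add: inner_commute)
    moreover have "zs \<bullet> L (xs + t *\<^sub>R (u - xs)) = zs \<bullet> L xs + t * (zs \<bullet> L (u - xs))"
      by (simp add: linear_add[OF assms(5)] linear_scale[OF assms(5)] inner_add_right)
    ultimately show "f (xs + t *\<^sub>R (u - xs)) + zs \<bullet> L (xs + t *\<^sub>R (u - xs))
        \<le> f xs + zs \<bullet> L xs + t * (gf xs \<bullet> (u - xs) + zs \<bullet> L (u - xs)) + t\<^sup>2 * (qnorm Su (u - xs) / 2)"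
      by (simp add: algebra_simps)
  qed (use min in \<open>simp add: algebra_simps\<close>)
  then show ?thesis by simp
qed

section \<open>Lagrange multipliers for a linear constraint\<close>

lemma linear_nonneg_zero_if_zero_on_rel_interior:
  fixes L :: "'x::euclidean_space \<Rightarrow> real"
  assumes ri: "w0 \<in> rel_interior D" and lin: "linear L"
    and nonneg: "\<And>w. w \<in> D \<Longrightarrow> 0 \<le> L w + k" and zero: "L w0 + k = 0" and w: "w \<in> D"
  shows "L w + k = 0"
proof -
  obtain e where e: "e > 0" "ball w0 e \<inter> affine hull D \<subseteq> D"
    using ri by (auto simp: mem_rel_interior_ball)
  have w0: "w0 \<in> D" using ri rel_interior_subset by blast
  define N where "N = norm (w - w0) + 1"
  define \<delta> where "\<delta> = e / 2 / N"
  have N: "0 < N" "norm (w - w0) \<le> N" by (simp_all add: N_def add_nonneg_pos)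
  have \<delta>: "\<delta> > 0" using e N by (simp add: \<delta>_def)
  have "\<delta> * norm (w - w0) \<le> \<delta> * N" using \<delta> N by (intro mult_left_mono) auto
  also have "\<dots> < e" using e N by (simp add: \<delta>_def)
  finally have "\<delta> * norm (w - w0) < e" .
  \<comment> \<open>the point reflected through \<open>w0\<close> away from \<open>w\<close> is still in \<open>D\<close>\<close>
  define w' where "w' = (1 + \<delta>) *\<^sub>R w0 + (- \<delta>) *\<^sub>R w"
  have "w' \<in> ball w0 e"
    using \<open>\<delta> * norm (w - w0) < e\<close> \<delta> by (simp add: w'_def dist_norm norm_minus_commute algebra_simps flip: scaleR_diff_right)
  moreover have "w' \<in> affine hull D"
    unfolding w'_def using w0 w hull_subset[of D affine] by (intro mem_affine[OF affine_affine_hull]) auto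
  ultimately have "0 \<le> L w' + k" using e nonneg by blast
  have "L w' = (1 + \<delta>) * L w0 - \<delta> * L w"
    by (simp only: w'_def linear_add[OF lin] linear_scale[OF lin] real_scaleR_def)
  moreover have "L w0 = - k" using zero by linarith
  ultimately have "L w' + k = - \<delta> * (L w + k)" by (simp add: algebra_simps)
  then show ?thesis using nonneg[OF w] \<open>0 \<le> L w' + k\<close> \<delta> by (simp add: mult_le_0_iff)
qed

lemma convex_strict_epigraph_image:
  assumes cvx: "convex_on D F" and lin: "linear L"
  shows "convex {(L w - c, t) | w t. w \<in> D \<and> F w - F0 < t}" (is "convex ?K")
  unfolding convex_alt
proof (intro ballI allI impI)
  fix k1 k2 and s :: real
  assume "k1 \<in> ?K" "k2 \<in> ?K" and s: "0 \<le> s \<and> s \<le> 1"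
  then obtain w1 t1 w2 t2 where k: "k1 = (L w1 - c, t1)" "k2 = (L w2 - c, t2)"
    and w: "w1 \<in> D" "w2 \<in> D" and t: "F w1 - F0 < t1" "F w2 - F0 < t2"
    by blast
  define w where "w = (1 - s) *\<^sub>R w1 + s *\<^sub>R w2"
  have "w \<in> D" unfolding w_def using convex_on_imp_convex[OF cvx] w s by (intro convexD_alt) auto
  have "(1 - s) * (F w1 - F0) + s * (F w2 - F0) < (1 - s) * t1 + s * t2"
  proof (cases "s = 1")
    case False
    then have "(1 - s) * (F w1 - F0) < (1 - s) * t1" using s t by (intro mult_strict_left_mono) auto
    moreover have "s * (F w2 - F0) \<le> s * t2" using s t by (intro mult_left_mono) auto
    ultimately show ?thesis by linarith
  qed (use t in simp)
  moreover have "F w \<le> (1 - s) * F w1 + s * F w2" unfolding w_def using convex_onD[OF cvx] s w by simp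
  moreover have "(1 - s) * (F w1 - F0) + s * (F w2 - F0) = (1 - s) * F w1 + s * F w2 - F0"
    by (simp add: algebra_simps)
  ultimately have "F w - F0 < (1 - s) * t1 + s * t2" by linarith
  moreover have "L w = (1 - s) *\<^sub>R L w1 + s *\<^sub>R L w2"
    by (simp only: w_def linear_add[OF lin] linear_scale[OF lin])
  then have "(1 - s) *\<^sub>R k1 + s *\<^sub>R k2 = (L w - c, (1 - s) * t1 + s * t2)"
    by (simp add: k algebra_simps)
  ultimately show "(1 - s) *\<^sub>R k1 + s *\<^sub>R k2 \<in> ?K" using \<open>w \<in> D\<close> by blast
qed

lemma nonneg_on_constraint_values_imp_zero:
  fixes L :: "'x::euclidean_space \<Rightarrow> 'c::euclidean_space"
  assumes lin: "linear L" and slater: "w0 \<in> rel_interior D" "L w0 = c"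
    and nonneg: "\<And>w. w \<in> D \<Longrightarrow> 0 \<le> y \<bullet> (L w - c)" and span: "y \<in> span ((\<lambda>w. L w - c) ` D)"
  shows "y = 0"
proof -
  have linL: "linear (\<lambda>w. y \<bullet> L w)"
    by (rule linearI) (simp_all add: linear_add[OF lin] linear_scale[OF lin] inner_add_right)
  have "y \<bullet> L w + - (y \<bullet> c) = 0" if "w \<in> D" for w
    by (rule linear_nonneg_zero_if_zero_on_rel_interior[OF slater(1) linL])
      (use nonneg slater(2) that in \<open>simp_all add: inner_diff_right\<close>)
  then have "orthogonal y k" if "k \<in> (\<lambda>w. L w - c) ` D" for k
    using that by (auto simp: orthogonal_def inner_diff_right)
  then show ?thesis using orthogonal_to_span[OF span] orthogonal_self by blast
qed

text \<open>Proof: separate the origin from the strict epigraph of the value function.\<close>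

lemma linear_constraint_multiplier:
  fixes F :: "'x::euclidean_space \<Rightarrow> real" and L :: "'x \<Rightarrow> 'c::euclidean_space"
  assumes cvx: "convex_on D F" and lin: "linear L"
    and slater: "w0 \<in> rel_interior D" "L w0 = c"
    and opt: "ws \<in> D" "L ws = c" "\<And>w. w \<in> D \<Longrightarrow> L w = c \<Longrightarrow> F ws \<le> F w"
  obtains y where "\<And>w. w \<in> D \<Longrightarrow> F ws \<le> F w + y \<bullet> (L w - c)"
proof -
  define K where "K = {(L w - c, t) | w t. w \<in> D \<and> F w - F ws < t}"
  have inK: "(L w - c, t) \<in> K" if "w \<in> D" "F w - F ws < t" for w t
    using that unfolding K_def by blast
  have "convex K" unfolding K_def using cvx lin by (rule convex_strict_epigraph_image)
  moreover have "K \<noteq> {}" using inK[OF opt(1), of 1] by auto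
  moreover have "0 \<notin> K"
  proof
    assume "0 \<in> K"
    then obtain w t where "0 = L w - c" "0 = t" "w \<in> D" "F w - F ws < t"
      unfolding K_def zero_prod_def by blast
    then show False using opt(3)[of w] by simp
  qed
  ultimately obtain a where a: "a \<in> span K" "a \<noteq> 0" "\<And>k. k \<in> K \<Longrightarrow> 0 \<le> a \<bullet> k"
    using separating_hyperplane_set_0_inspan by blast
  have sep: "0 \<le> fst a \<bullet> (L w - c) + snd a * t" if "w \<in> D" "F w - F ws < t" for w t
    using a(3)[OF inK[OF that]] by (simp add: inner_prod_def)
  have "0 \<le> snd a" using sep[OF opt(1), of 1] opt(2) by simp
  moreover have "snd a \<noteq> 0"
  proof
    assume "snd a = 0"
    have "fst ` K \<subseteq> (\<lambda>w. L w - c) ` D" unfolding K_def by auto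
    then have "fst a \<in> span ((\<lambda>w. L w - c) ` D)"
      using a(1) span_linear_image[OF linear_fst, of K] span_mono by blast
    then have "fst a = 0"
      using nonneg_on_constraint_values_imp_zero[OF lin slater] sep \<open>snd a = 0\<close>
      by (metis add.right_neutral less_add_one mult_zero_left)
    then show False using a(2) \<open>snd a = 0\<close> by (simp add: prod_eq_iff)
  qed
  ultimately have "snd a > 0" by simp
  show ?thesis
  proof (rule that)
    fix w assume w: "w \<in> D"
    show "F ws \<le> F w + (fst a /\<^sub>R snd a) \<bullet> (L w - c)"
    proof (rule field_le_epsilon)
      fix e :: real assume "0 < e"
      then have "0 \<le> fst a \<bullet> (L w - c) + snd a * (F w - F ws + e)" using sep[OF w] by simp
      then show "F ws \<le> F w + (fst a /\<^sub>R snd a) \<bullet> (L w - c) + e"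
        using \<open>snd a > 0\<close> by (simp add: field_simps)
    qed
  qed
qed

section \<open>Majorized functions and the step-size conditions\<close>

lemma majorized_three_point:
  assumes lower: "\<And>u v. f v + (u - v) \<bullet> gf v + qnorm Sl (u - v) / 2 \<le> f u"
    and upper: "\<And>u v. f u \<le> f v + (u - v) \<bullet> gf v + qnorm Su (u - v) / 2"
  shows "gf x0 \<bullet> (u - x1)
    \<le> (u - x1) \<bullet> gf u - qnorm Sl (x1 - u) / 2 - qnorm Sl (u - x0) / 2 + qnorm Su (x1 - x0) / 2"
  using upper[of x1 x0] lower[of x0 u] lower[of u x1]
  by (simp add: inner_diff_left inner_diff_right inner_commute)

lemma majorized_prox_three_point:
  assumes lower: "\<And>u v. f v + (u - v) \<bullet> gf v + qnorm Sl (u - v) / 2 \<le> f u"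
    and upper: "\<And>u v. f u \<le> f v + (u - v) \<bullet> gf v + qnorm Su (u - v) / 2"
    and ops: "self_adjoint_op Sl" "psd_op Sl" "self_adjoint_op Su" "self_adjoint_op S"
  defines "G \<equiv> \<lambda>v. Su v + S v"
  shows "gf x0 \<bullet> (u - x1) + (x1 - x0) \<bullet> G (u - x1)
    \<le> (u - x1) \<bullet> gf u + (qnorm G (u - x0) - qnorm G (u - x1)) / 2
       - qnorm S (x1 - x0) / 2 - qnorm Sl (x1 - x0) / 4"
proof -
  have G: "self_adjoint_op G" unfolding G_def using ops by (intro self_adjoint_op_add)
  have "(x1 - x0) \<bullet> G (u - x1) = (qnorm G (u - x0) - qnorm G (u - x1) - qnorm G (x1 - x0)) / 2"
    using inner_op_eq_qnorm_diff[OF G, of "u - x1" "x1 - x0"] self_adjoint_op_inner[OF G, of "x1 - x0"]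
    by simp
  moreover have "qnorm Sl (x1 - x0) \<le> 2 * qnorm Sl (x1 - u) + 2 * qnorm Sl (u - x0)"
    using qnorm_add_le[OF ops(1,2), of "x1 - u" "u - x0"] by simp
  moreover have "qnorm G (x1 - x0) = qnorm Su (x1 - x0) + qnorm S (x1 - x0)"
    unfolding G_def by (rule qnorm_op_add)
  moreover note majorized_three_point[OF lower upper, of x0 u x1]
  ultimately show ?thesis unfolding G_def by argo
qed

lemma majorized_gradient_inner_le:
  assumes lower: "\<And>u v. g v + (u - v) \<bullet> gg v \<le> g u"
    and upper: "\<And>u v. g u \<le> g v + (u - v) \<bullet> gg v + qnorm Su (u - v) / 2" and "linear Su"
  shows "(gg a - gg b) \<bullet> (s - (a - b)) \<le> qnorm Su s / 4"
proof -
  define h where "h = (1/2) *\<^sub>R s"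
  have "qnorm Su h = qnorm Su s / 4" "qnorm Su (- h) = qnorm Su h"
    using qnorm_scaleR[OF assms(3), of "1/2" s] qnorm_scaleR[OF assms(3), of "-1" h]
    by (simp_all add: h_def power2_eq_square)
  then have "g (a - h) \<le> g a - h \<bullet> gg a + qnorm Su s / 8" "g (b + h) \<le> g b + h \<bullet> gg b + qnorm Su s / 8"
    using upper[of "a - h" a] upper[of "b + h" b] by simp_all
  moreover have "s = h + h" by (simp add: h_def flip: scaleR_add_left)
  then have "(gg a - gg b) \<bullet> (s - (a - b))
      = (a - h - b) \<bullet> gg b + (b + h - a) \<bullet> gg a + h \<bullet> gg a - h \<bullet> gg b"
    by (simp add: inner_diff_left inner_diff_right inner_add_left inner_add_right inner_commute)
  ultimately show ?thesis using lower[of b "a - h"] lower[of a "b + h"] by linarith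
qed

lemma dual_step_identity:
  fixes z0 z1 r w :: "'a::real_inner"
  assumes "z1 = z0 + (\<tau> * \<sigma>) *\<^sub>R r" "\<tau> * \<sigma> \<noteq> 0"
  shows "r \<bullet> (w - (z0 + \<sigma> *\<^sub>R r))
    = ((norm (z0 - w))\<^sup>2 - (norm (z1 - w))\<^sup>2) / (2 * \<tau> * \<sigma>) + (\<tau> * \<sigma> / 2 - \<sigma>) * (norm r)\<^sup>2"
proof -
  have "(norm (z1 - w))\<^sup>2 = (norm (z0 - w))\<^sup>2 + 2 * (\<tau> * \<sigma>) * ((z0 - w) \<bullet> r) + (\<tau> * \<sigma>)\<^sup>2 * (norm r)\<^sup>2"
    using power2_norm_add[of "z0 - w" "(\<tau> * \<sigma>) *\<^sub>R r"] assms(1) by (simp add: algebra_simps)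
  then have "((norm (z0 - w))\<^sup>2 - (norm (z1 - w))\<^sup>2) / (2 * \<tau> * \<sigma>) = - ((z0 - w) \<bullet> r) - \<tau> * \<sigma> / 2 * (norm r)\<^sup>2"
    using assms(2) by (simp add: field_simps power2_eq_square)
  then show ?thesis
    by (simp add: inner_diff_left inner_diff_right inner_add_right power2_norm_eq_inner inner_commute algebra_simps)
qed

lemma step_size_lower_bound:
  fixes \<tau> \<alpha> :: real
  assumes \<tau>: "0 < \<tau>" and \<alpha>: "\<tau> / min (1 + \<tau>) (1 + 1 / \<tau>) < \<alpha>"
  shows "\<tau> < \<alpha> * (1 + \<tau>)" "\<tau>\<^sup>2 < \<alpha> * (1 + \<tau>)"
proof (atomize (full), cases "\<tau> \<le> 1")
  case True
  then have "1 \<le> 1 / \<tau>" using \<tau> by simp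
  then have "min (1 + \<tau>) (1 + 1 / \<tau>) = 1 + \<tau>" using True by (simp add: min_def)
  then have "\<tau> < \<alpha> * (1 + \<tau>)" using \<alpha> \<tau> by (simp add: pos_divide_less_eq)
  moreover have "\<tau>\<^sup>2 \<le> \<tau>" using True \<tau> mult_left_le[of \<tau> \<tau>] by (simp add: power2_eq_square)
  ultimately show "\<tau> < \<alpha> * (1 + \<tau>) \<and> \<tau>\<^sup>2 < \<alpha> * (1 + \<tau>)" by simp
next
  case False
  then have "1 / \<tau> < 1" by simp
  then have "1 + 1 / \<tau> \<le> 1 + \<tau>" using False by linarith
  then have "min (1 + \<tau>) (1 + 1 / \<tau>) = 1 + 1 / \<tau>" by (rule min_absorb2)
  moreover have "\<tau> / (1 + 1 / \<tau>) = \<tau>\<^sup>2 / (1 + \<tau>)" using \<tau> by (simp add: field_simps power2_eq_square)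
  ultimately have "\<tau>\<^sup>2 < \<alpha> * (1 + \<tau>)" using \<alpha> \<tau> by (simp add: pos_divide_less_eq)
  moreover have "\<tau> < \<tau>\<^sup>2" using False less_1_mult[of \<tau> \<tau>] mult_strict_left_mono[of 1 \<tau> \<tau>]
    by (simp add: power2_eq_square)
  ultimately show "\<tau> < \<alpha> * (1 + \<tau>) \<and> \<tau>\<^sup>2 < \<alpha> * (1 + \<tau>)" by simp
qed

lemma ipadmm_parameter_bounds:
  fixes \<tau> \<alpha> :: real
  assumes \<tau>: "0 < \<tau>" and \<alpha>: "\<tau> / min (1 + \<tau>) (1 + 1 / \<tau>) < \<alpha>" "\<alpha> \<le> 1"
  defines "m \<equiv> min \<tau> (1 + \<tau> - \<tau>\<^sup>2)"
  shows "0 < \<alpha>" "0 < 2 * \<alpha> - \<tau>" "0 \<le> \<alpha> + 1 - \<tau>" "m * \<alpha> \<le> 1"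
    and "(\<alpha> * (\<tau> - 1))\<^sup>2 \<le> (2 * \<alpha> - \<tau>) * (\<alpha> * (1 - m))"
proof -
  note lb = step_size_lower_bound[OF \<tau> \<alpha>(1)]
  have "0 < \<alpha> * (1 + \<tau>)" using lb(1) \<tau> by linarith
  then show \<alpha>0: "0 < \<alpha>" using \<tau> by (simp add: zero_less_mult_iff)
  have "\<tau> * (1 + \<tau>) < (2 * \<alpha>) * (1 + \<tau>)" using lb by (simp add: power2_eq_square algebra_simps)
  then show "0 < 2 * \<alpha> - \<tau>" using \<tau> by (simp add: mult_less_cancel_right)
  have "(\<tau> - 1) * (1 + \<tau>) < \<alpha> * (1 + \<tau>)" using lb(2) by (simp add: power2_eq_square algebra_simps)
  then show "0 \<le> \<alpha> + 1 - \<tau>" using \<tau> by (simp add: mult_less_cancel_right)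
  have "m \<le> 1"
  proof (cases "\<tau> \<le> 1")
    case False
    then have "\<tau> \<le> \<tau>\<^sup>2" using mult_left_mono[of 1 \<tau> \<tau>] by (simp add: power2_eq_square)
    then show ?thesis by (simp add: m_def)
  qed (simp add: m_def)
  then show "m * \<alpha> \<le> 1"
    using \<alpha>(2) \<alpha>0 mult_le_one[of m \<alpha>] mult_nonpos_nonneg[of m \<alpha>] by linarith
  show "(\<alpha> * (\<tau> - 1))\<^sup>2 \<le> (2 * \<alpha> - \<tau>) * (\<alpha> * (1 - m))"
  proof (cases "\<tau> \<le> 1")
    case True
    then have "\<tau>\<^sup>2 \<le> 1" using \<tau> mult_le_one[of \<tau> \<tau>] by (simp add: power2_eq_square)
    then have "m = \<tau>" by (simp add: m_def)
    then have "(2 * \<alpha> - \<tau>) * (\<alpha> * (1 - m)) - (\<alpha> * (\<tau> - 1))\<^sup>2 = \<alpha> * (1 - \<tau>) * (\<alpha> * (1 + \<tau>) - \<tau>)"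
      by (simp add: algebra_simps power2_eq_square)
    also have "\<dots> \<ge> 0" using True lb \<alpha>0 by simp
    finally show ?thesis by simp
  next
    case False
    then have "1 \<le> \<tau>\<^sup>2" using mult_mono[of 1 \<tau> 1 \<tau>] by (simp add: power2_eq_square)
    then have m: "m = 1 + \<tau> - \<tau>\<^sup>2" by (simp add: m_def)
    have "(2 * \<alpha> - \<tau>) * (\<alpha> * (1 - m)) - (\<alpha> * (\<tau> - 1))\<^sup>2 = \<alpha> * (\<tau> - 1) * (\<alpha> * (1 + \<tau>) - \<tau>\<^sup>2)"
      unfolding m by (simp add: algebra_simps power2_eq_square)
    also have "\<dots> \<ge> 0" using False lb \<alpha>0 by simp
    finally show ?thesis by simp
  qed
qed

section \<open>The majorized indefinite-proximal ADMM\<close>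

locale majorized_ipadmm =
  fixes p :: "'a::euclidean_space \<Rightarrow> ereal" and q :: "'b::euclidean_space \<Rightarrow> ereal"
    and f :: "'a \<Rightarrow> real" and g :: "'b \<Rightarrow> real"
    and gf :: "'a \<Rightarrow> 'a" and gg :: "'b \<Rightarrow> 'b"
    and A :: "'c::euclidean_space \<Rightarrow> 'a" and B :: "'c \<Rightarrow> 'b" and c :: 'c
    and Sf Sfh S :: "'a \<Rightarrow> 'a" and Sg Sgh T :: "'b \<Rightarrow> 'b"
    and \<sigma> \<tau> \<alpha> :: real
    and x :: "nat \<Rightarrow> 'a" and y :: "nat \<Rightarrow> 'b" and z :: "nat \<Rightarrow> 'c"
  assumes p: "closed_proper_convex p" and q: "closed_proper_convex q"
    and f_cvx: "convex_on UNIV f" and g_cvx: "convex_on UNIV g"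
    and linA: "linear A" and linB: "linear B"
    and CQ: "\<exists>x0 y0. (x0, y0) \<in> rel_interior (edom p \<times> edom q) \<and> adjoint A x0 + adjoint B y0 = c"
    and sol: "\<exists>xs ys. adjoint A xs + adjoint B ys = c \<and>
               (\<forall>x' y'. adjoint A x' + adjoint B y' = c \<longrightarrow>
                  p xs + ereal (f xs) + q ys + ereal (g ys) \<le> p x' + ereal (f x') + q y' + ereal (g y'))"
    and ops: "self_adjoint_op Sf" "self_adjoint_op Sfh" "self_adjoint_op Sg" "self_adjoint_op Sgh"
             "self_adjoint_op S" "self_adjoint_op T"
    and Sig_psd: "psd_op Sf" "psd_op Sg" "psd_op (\<lambda>u. Sfh u - Sf u)" "psd_op (\<lambda>u. Sgh u - Sg u)"
    and f_maj: "\<And>u v. f v + (u - v) \<bullet> gf v + qnorm Sf (u - v) / 2 \<le> f u"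
               "\<And>u v. f u \<le> f v + (u - v) \<bullet> gf v + qnorm Sfh (u - v) / 2"
    and g_maj: "\<And>u v. g v + (u - v) \<bullet> gg v + qnorm Sg (u - v) / 2 \<le> g u"
               "\<And>u v. g u \<le> g v + (u - v) \<bullet> gg v + qnorm Sgh (u - v) / 2"
    and sigma: "\<sigma> > 0" and tau_pos: "\<tau> > 0"
    and init: "x 0 \<in> edom p" "y 0 \<in> edom q"
    and xstep: "\<And>k u.
      p (x (Suc k)) + ereal (gf (x k) \<bullet> x (Suc k) + qnorm (\<lambda>v. Sfh v + S v) (x (Suc k) - x k) / 2
        + z k \<bullet> adjoint A (x (Suc k)) + \<sigma> / 2 * (norm (adjoint A (x (Suc k)) + adjoint B (y k) - c))\<^sup>2)
      \<le> p u + ereal (gf (x k) \<bullet> u + qnorm (\<lambda>v. Sfh v + S v) (u - x k) / 2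
        + z k \<bullet> adjoint A u + \<sigma> / 2 * (norm (adjoint A u + adjoint B (y k) - c))\<^sup>2)"
    and ystep: "\<And>k v.
      q (y (Suc k)) + ereal (gg (y k) \<bullet> y (Suc k) + qnorm (\<lambda>w. Sgh w + T w) (y (Suc k) - y k) / 2
        + z k \<bullet> adjoint B (y (Suc k)) + \<sigma> / 2 * (norm (adjoint A (x (Suc k)) + adjoint B (y (Suc k)) - c))\<^sup>2)
      \<le> q v + ereal (gg (y k) \<bullet> v + qnorm (\<lambda>w. Sgh w + T w) (v - y k) / 2
        + z k \<bullet> adjoint B v + \<sigma> / 2 * (norm (adjoint A (x (Suc k)) + adjoint B v - c))\<^sup>2)"
    and zstep: "\<And>k. z (Suc k) = z k + (\<tau> * \<sigma>) *\<^sub>R (adjoint A (x (Suc k)) + adjoint B (y (Suc k)) - c)"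
    and alpha: "\<tau> / min (1 + \<tau>) (1 + 1 / \<tau>) < \<alpha>" "\<alpha> \<le> 1"
    and c1: "psd_op (\<lambda>u. Sfh u + S u)"
    and c2: "psd_op (\<lambda>u. (1/2) *\<^sub>R Sf u + S u + ((1 - \<alpha>) * \<sigma> / 2) *\<^sub>R A (adjoint A u))"
    and c3: "pd_op (\<lambda>u. (1/2) *\<^sub>R Sf u + S u + \<sigma> *\<^sub>R A (adjoint A u))"
    and c4: "psd_op (\<lambda>v. (1/2) *\<^sub>R Sgh v + T v)"
    and c5: "pd_op (\<lambda>v. (1/2) *\<^sub>R Sg v + T v + (min \<tau> (1 + \<tau> - \<tau>\<^sup>2) * \<alpha> * \<sigma>) *\<^sub>R B (adjoint B v))"
begin

abbreviation "At \<equiv> adjoint A"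
abbreviation "Bt \<equiv> adjoint B"
abbreviation "Gf \<equiv> \<lambda>v. Sfh v + S v"
abbreviation "Gg \<equiv> \<lambda>v. Sgh v + T v"

text \<open>\<open>P\<close> and \<open>Q\<close> are the finite values of \<open>p\<close> and \<open>q\<close> on their domains; \<open>zt k\<close> is the
  paper's \<open>z\<^sup>~\<^bsup>k+1\<^esup>\<close>.\<close>

definition "P u = real_of_ereal (p u)"
definition "Q v = real_of_ereal (q v)"
definition "r k = At (x k) + Bt (y k) - c"
definition "zt k = z k + \<sigma> *\<^sub>R r (Suc k)"
definition "m = min \<tau> (1 + \<tau> - \<tau>\<^sup>2)"

lemma linear_At: "linear At" using linA by (rule adjoint_linear)
lemma linear_Bt: "linear Bt" using linB by (rule adjoint_linear)
lemma self_adjoint_Gf: "self_adjoint_op Gf" using ops by (intro self_adjoint_op_add)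
lemma self_adjoint_Gg: "self_adjoint_op Gg" using ops by (intro self_adjoint_op_add)

lemma inner_A: "A w \<bullet> d = w \<bullet> At d"
  using adjoint_works[OF linA, of w d] by simp

lemma inner_B: "B w \<bullet> d = w \<bullet> Bt d"
  using adjoint_works[OF linB, of w d] by simp

lemma convex_on_P: "convex_on (edom p) P"
  using closed_proper_convex_convex_on[OF p] unfolding P_def[abs_def] .

lemma convex_on_Q: "convex_on (edom q) Q"
  using closed_proper_convex_convex_on[OF q] unfolding Q_def[abs_def] .

lemma p_eq_P: "u \<in> edom p \<Longrightarrow> p u = ereal (P u)"
  unfolding P_def by (rule closed_proper_convex_finite[OF p])

lemma q_eq_Q: "v \<in> edom q \<Longrightarrow> q v = ereal (Q v)"
  unfolding Q_def by (rule closed_proper_convex_finite[OF q])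

lemma x_in_edom: "x k \<in> edom p"
proof (cases k)
  case (Suc j)
  then show ?thesis using edom_if_le_finite[OF p xstep[of j "x 0"] init(1)] by simp
qed (use init in simp)

lemma y_in_edom: "y k \<in> edom q"
proof (cases k)
  case (Suc j)
  then show ?thesis using edom_if_le_finite[OF q ystep[of j "y 0"] init(2)] by simp
qed (use init in simp)

lemma psd_Gf: "0 \<le> qnorm Gf d"
  using c1 by (simp add: psd_op_def)

lemma psd_Gg: "0 \<le> qnorm Gg d"
proof -
  have "0 \<le> qnorm Sgh d / 2 + qnorm T d"
    using c4 by (simp add: psd_op_def qnorm_op_add qnorm_op_scaleR)
  moreover have "0 \<le> qnorm Sgh d"
    using psd_op_le[OF Sig_psd(4)] Sig_psd(2) by (metis psd_op_def order_trans)
  ultimately show ?thesis by (simp add: qnorm_op_add)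
qed

lemma g_gradient_ineq: "g v + (u - v) \<bullet> gg v \<le> g u"
proof -
  have "0 \<le> qnorm Sg (u - v)" using Sig_psd(2) by (simp add: psd_op_def)
  then show ?thesis using g_maj(1)[of v u] by linarith
qed

lemma x_step_variational_ineq:
  assumes "u \<in> edom p"
  shows "0 \<le> P u - P (x (Suc k)) + (gf (x k) \<bullet> (u - x (Suc k)) + (x (Suc k) - x k) \<bullet> Gf (u - x (Suc k))
      + z k \<bullet> At (u - x (Suc k)) + \<sigma> * ((At (x (Suc k)) + Bt (y k) - c) \<bullet> At (u - x (Suc k))))"
proof (rule variational_ineq_of_min[OF convex_on_P x_in_edom assms])
  define h where "h v = gf (x k) \<bullet> v + qnorm Gf (v - x k) / 2 + z k \<bullet> At v + \<sigma> / 2 * (norm (At v + Bt (y k) - c))\<^sup>2" for v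
  show "P (x (Suc k)) + h (x (Suc k)) \<le> P v + h v" if "v \<in> edom p" for v
    using xstep[of k v] p_eq_P[OF x_in_edom[of "Suc k"]] p_eq_P[OF that] unfolding h_def by simp
  show "h (x (Suc k) + t *\<^sub>R (u - x (Suc k))) \<le> h (x (Suc k)) + t * (gf (x k) \<bullet> (u - x (Suc k))
      + (x (Suc k) - x k) \<bullet> Gf (u - x (Suc k)) + z k \<bullet> At (u - x (Suc k))
      + \<sigma> * ((At (x (Suc k)) + Bt (y k) - c) \<bullet> At (u - x (Suc k))))
      + t\<^sup>2 * (qnorm Gf (u - x (Suc k)) / 2 + \<sigma> / 2 * (norm (At (u - x (Suc k))))\<^sup>2)" for t
    by (simp only: h_def quadratic_along_segment[OF self_adjoint_Gf linear_At])
qed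

lemma y_step_variational_ineq:
  assumes "v \<in> edom q"
  shows "0 \<le> Q v - Q (y (Suc k)) + (gg (y k) \<bullet> (v - y (Suc k)) + (y (Suc k) - y k) \<bullet> Gg (v - y (Suc k))
      + z k \<bullet> Bt (v - y (Suc k)) + \<sigma> * (r (Suc k) \<bullet> Bt (v - y (Suc k))))"
proof -
  define h where "h w = gg (y k) \<bullet> w + qnorm Gg (w - y k) / 2 + z k \<bullet> Bt w
    + \<sigma> / 2 * (norm (Bt w + At (x (Suc k)) - c))\<^sup>2" for w
  have "0 \<le> Q v - Q (y (Suc k)) + (gg (y k) \<bullet> (v - y (Suc k)) + (y (Suc k) - y k) \<bullet> Gg (v - y (Suc k))
      + z k \<bullet> Bt (v - y (Suc k)) + \<sigma> * ((Bt (y (Suc k)) + At (x (Suc k)) - c) \<bullet> Bt (v - y (Suc k))))"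
  proof (rule variational_ineq_of_min[OF convex_on_Q y_in_edom assms, where h = h
        and M = "qnorm Gg (v - y (Suc k)) / 2 + \<sigma> / 2 * (norm (Bt (v - y (Suc k))))\<^sup>2"])
    show "Q (y (Suc k)) + h (y (Suc k)) \<le> Q w + h w" if "w \<in> edom q" for w
      using ystep[of k w] q_eq_Q[OF y_in_edom[of "Suc k"]] q_eq_Q[OF that]
      unfolding h_def by (simp add: algebra_simps)
  qed (simp only: h_def quadratic_along_segment[OF self_adjoint_Gg linear_Bt])
  moreover have "Bt (y (Suc k)) + At (x (Suc k)) - c = r (Suc k)" by (simp add: r_def algebra_simps)
  ultimately show ?thesis by simp
qed

definition kkt_point :: "'a \<Rightarrow> 'b \<Rightarrow> 'c \<Rightarrow> bool" where
  "kkt_point xs ys zs \<longleftrightarrow> xs \<in> edom p \<and> ys \<in> edom q \<and> At xs + Bt ys = c \<and>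
     (\<forall>u \<in> edom p. 0 \<le> P u - P xs + gf xs \<bullet> (u - xs) + zs \<bullet> At (u - xs)) \<and>
     (\<forall>v \<in> edom q. 0 \<le> Q v - Q ys + gg ys \<bullet> (v - ys) + zs \<bullet> Bt (v - ys))"

lemma solution_exists:
  obtains xs ys where "xs \<in> edom p" "ys \<in> edom q" "At xs + Bt ys = c"
    "\<And>u v. u \<in> edom p \<Longrightarrow> v \<in> edom q \<Longrightarrow> At u + Bt v = c \<Longrightarrow>
       P xs + f xs + (Q ys + g ys) \<le> P u + f u + (Q v + g v)"
proof -
  obtain x0 y0 where "(x0, y0) \<in> rel_interior (edom p \<times> edom q)" and c0: "At x0 + Bt y0 = c"
    using CQ by blast
  then have x0: "x0 \<in> edom p" and y0: "y0 \<in> edom q" using rel_interior_subset by blast+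
  obtain xs ys where cs: "At xs + Bt ys = c" and opt: "\<And>x' y'. At x' + Bt y' = c \<Longrightarrow>
       p xs + ereal (f xs) + q ys + ereal (g ys) \<le> p x' + ereal (f x') + q y' + ereal (g y')"
    using sol by blast
  have "p xs + ereal (f xs) + q ys + ereal (g ys) \<le> ereal (P x0 + f x0 + Q y0 + g y0)"
    using opt[OF c0] p_eq_P[OF x0] q_eq_Q[OF y0] by simp
  then have xs: "xs \<in> edom p" and ys: "ys \<in> edom q"
    using closed_proper_convex_not_minf[OF p, of xs] closed_proper_convex_not_minf[OF q, of ys]
    by (cases "p xs"; cases "q ys"; simp add: edom_def)+
  show ?thesis
  proof (rule that[OF xs ys cs])
    fix u v assume "u \<in> edom p" "v \<in> edom q" "At u + Bt v = c"
    then show "P xs + f xs + (Q ys + g ys) \<le> P u + f u + (Q v + g v)"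
      using opt[of u v] p_eq_P[OF xs] q_eq_Q[OF ys] p_eq_P[of u] q_eq_Q[of v] by simp
  qed
qed

lemma saddle_point_exists:
  obtains xs ys zs where "xs \<in> edom p" "ys \<in> edom q" "At xs + Bt ys = c"
    "\<And>u v. u \<in> edom p \<Longrightarrow> v \<in> edom q \<Longrightarrow>
       P xs + f xs + (Q ys + g ys) \<le> P u + f u + (Q v + g v) + zs \<bullet> (At u + Bt v - c)"
proof -
  obtain x0 y0 where ri: "(x0, y0) \<in> rel_interior (edom p \<times> edom q)" and c0: "At x0 + Bt y0 = c"
    using CQ by blast
  obtain xs ys where xs: "xs \<in> edom p" and ys: "ys \<in> edom q" and cs: "At xs + Bt ys = c"
    and opt: "\<And>u v. u \<in> edom p \<Longrightarrow> v \<in> edom q \<Longrightarrow> At u + Bt v = c \<Longrightarrow>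
       P xs + f xs + (Q ys + g ys) \<le> P u + f u + (Q v + g v)"
    using solution_exists by blast
  define F where "F w = (P (fst w) + f (fst w)) + (Q (snd w) + g (snd w))" for w
  have "convex_on (edom p) (\<lambda>u. P u + f u)"
    using convex_on_P convex_on_subset[OF f_cvx subset_UNIV convex_on_imp_convex[OF convex_on_P]]
    by (rule convex_on_add)
  moreover have "convex_on (edom q) (\<lambda>v. Q v + g v)"
    using convex_on_Q convex_on_subset[OF g_cvx subset_UNIV convex_on_imp_convex[OF convex_on_Q]]
    by (rule convex_on_add)
  ultimately have cvxF: "convex_on (edom p \<times> edom q) F"
    unfolding F_def by (rule convex_on_Times_add)
  have linL: "linear (\<lambda>w. At (fst w) + Bt (snd w))"
    using linear_compose[OF linear_fst linear_At] linear_compose[OF linear_snd linear_Bt]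
    unfolding o_def by (rule linear_compose_add)
  have Fmin: "F (xs, ys) \<le> F w" if "w \<in> edom p \<times> edom q" "At (fst w) + Bt (snd w) = c" for w
    using opt[of "fst w" "snd w"] that by (simp add: F_def mem_Times_iff)
  have "At (fst (x0, y0)) + Bt (snd (x0, y0)) = c" "At (fst (xs, ys)) + Bt (snd (xs, ys)) = c"
    "(xs, ys) \<in> edom p \<times> edom q"
    using c0 cs xs ys by simp_all
  then obtain zs where L: "\<And>w. w \<in> edom p \<times> edom q \<Longrightarrow> F (xs, ys) \<le> F w + zs \<bullet> (At (fst w) + Bt (snd w) - c)"
    using linear_constraint_multiplier[OF cvxF linL ri _ _ _ Fmin] by blast
  show ?thesis
  proof (rule that[OF xs ys cs])
    fix u v assume "u \<in> edom p" "v \<in> edom q"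
    then show "P xs + f xs + (Q ys + g ys) \<le> P u + f u + (Q v + g v) + zs \<bullet> (At u + Bt v - c)"
      using L[of "(u, v)"] by (simp add: F_def)
  qed
qed

lemma kkt_point_exists: obtains xs ys zs where "kkt_point xs ys zs"
proof -
  obtain xs ys zs where xs: "xs \<in> edom p" and ys: "ys \<in> edom q" and cs: "At xs + Bt ys = c"
    and L: "\<And>u v. u \<in> edom p \<Longrightarrow> v \<in> edom q \<Longrightarrow>
       P xs + f xs + (Q ys + g ys) \<le> P u + f u + (Q v + g v) + zs \<bullet> (At u + Bt v - c)"
    using saddle_point_exists by blast
  have "0 \<le> P u - P xs + gf xs \<bullet> (u - xs) + zs \<bullet> At (u - xs)" if "u \<in> edom p" for u
  proof (rule variational_ineq_of_min_majorized[OF convex_on_P xs that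
        self_adjoint_op_linear[OF ops(2)] linear_At f_maj(2)])
    fix w assume "w \<in> edom p"
    then show "P xs + f xs + zs \<bullet> At xs \<le> P w + f w + zs \<bullet> At w"
      using L[OF _ ys, of w] by (simp add: inner_diff_right inner_add_right flip: cs)
  qed
  moreover have "0 \<le> Q v - Q ys + gg ys \<bullet> (v - ys) + zs \<bullet> Bt (v - ys)" if "v \<in> edom q" for v
  proof (rule variational_ineq_of_min_majorized[OF convex_on_Q ys that
        self_adjoint_op_linear[OF ops(4)] linear_Bt g_maj(2)])
    fix w assume "w \<in> edom q"
    then show "Q ys + g ys + zs \<bullet> Bt ys \<le> Q w + g w + zs \<bullet> Bt w"
      using L[OF xs, of w] by (simp add: inner_diff_right inner_add_right flip: cs)
  qed
  ultimately have "kkt_point xs ys zs" using xs ys cs by (simp add: kkt_point_def)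
  then show ?thesis by (rule that)
qed

definition vi_term :: "'a \<Rightarrow> 'b \<Rightarrow> 'c \<Rightarrow> 'a \<Rightarrow> 'b \<Rightarrow> 'c \<Rightarrow> real" where
  "vi_term u v w x' y' z' = (x' - u) \<bullet> (gf u + A w) + (y' - v) \<bullet> (gg v + B w)
     + (z' - w) \<bullet> (- (At u + Bt v - c))"

definition "Gap k u v w = P (x (Suc k)) + Q (y (Suc k)) - P u - Q v + vi_term u v w (x (Suc k)) (y (Suc k)) (zt k)"

text \<open>The Lyapunov function of the analysis: by \<open>Gap_le_Psi_diff\<close> it decreases by at least the
  gap in every step.\<close>

definition "Psi j u v w = (norm (z (Suc j) - w))\<^sup>2 / (2 * \<tau> * \<sigma>) + qnorm Gf (u - x (Suc j)) / 2
   + qnorm Gg (v - y (Suc j)) / 2 + \<sigma> / 2 * (norm (At u + Bt (y (Suc j)) - c))\<^sup>2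
   + (\<alpha> + 1 - \<tau>) * \<sigma> / 2 * (norm (r (Suc j)))\<^sup>2 + \<alpha> / 2 * qnorm Gg (y (Suc j) - y j)"

text \<open>Two consecutive \<open>y\<close>-subproblems, each tested at the other's solution.\<close>

lemma y_step_monotone:
  fixes j :: nat
  defines "b \<equiv> Bt (y (Suc (Suc j)) - y (Suc j))"
  shows "\<sigma> * (r (Suc (Suc j)) \<bullet> b) + (\<tau> - 1) * \<sigma> * (r (Suc j) \<bullet> b)
    \<le> (qnorm Gg (y (Suc j) - y j) - qnorm Gg (y (Suc (Suc j)) - y (Suc j))) / 2"
proof -
  define Ym Y0 Y1 where "Ym = y j" and "Y0 = y (Suc j)" and "Y1 = y (Suc (Suc j))"
  define s where "s = (Y1 - Y0) - (Y0 - Ym)"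
  have b: "Bt (y (Suc (Suc j)) - y (Suc j)) = b" "Bt (y (Suc j) - y (Suc (Suc j))) = - b"
    by (simp_all add: b_def linear_diff[OF linear_Bt])
  have linGg: "linear Gg" using self_adjoint_Gg by (rule self_adjoint_op_linear)
  have "0 \<le> Q Y1 - Q Y0 + (gg Ym \<bullet> (Y1 - Y0) + (Y0 - Ym) \<bullet> Gg (Y1 - Y0) + z j \<bullet> b + \<sigma> * (r (Suc j) \<bullet> b))"
    using y_step_variational_ineq[OF y_in_edom, of "Suc (Suc j)" j] by (simp only: Ym_def Y0_def Y1_def b)
  moreover have "0 \<le> Q Y0 - Q Y1 + (gg Y0 \<bullet> (Y0 - Y1) + (Y1 - Y0) \<bullet> Gg (Y0 - Y1)
      + z (Suc j) \<bullet> - b + \<sigma> * (r (Suc (Suc j)) \<bullet> - b))"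
    using y_step_variational_ineq[OF y_in_edom, of "Suc j" "Suc j"] by (simp only: Y0_def Y1_def b)
  moreover have "gg Y0 \<bullet> (Y0 - Y1) = - (gg Y0 \<bullet> (Y1 - Y0))" by (simp add: inner_diff_right)
  moreover have "(Y1 - Y0) \<bullet> Gg (Y0 - Y1) = - qnorm Gg (Y1 - Y0)"
    using linear_neg[OF linGg, of "Y1 - Y0"] by (simp add: qnorm_def inner_add_right inner_diff_right)
  moreover have "z (Suc j) \<bullet> b = z j \<bullet> b + \<tau> * \<sigma> * (r (Suc j) \<bullet> b)"
    using zstep[of j] by (simp add: r_def inner_add_left)
  moreover have "gg Ym \<bullet> (Y1 - Y0) - gg Y0 \<bullet> (Y1 - Y0) \<le> qnorm Sgh s / 4"
    using majorized_gradient_inner_le[OF g_gradient_ineq g_maj(2) self_adjoint_op_linear[OF ops(4)],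
        of Ym Y0 s] by (simp add: s_def inner_diff_left)
  moreover have "(Y0 - Ym) \<bullet> Gg (Y1 - Y0) = (qnorm Gg (Y1 - Y0) + qnorm Gg (Y0 - Ym) - qnorm Gg s) / 2"
    using qnorm_diff[OF self_adjoint_Gg, of "Y1 - Y0" "Y0 - Ym"] self_adjoint_op_inner[OF self_adjoint_Gg]
    by (simp add: s_def)
  \<comment> \<open>the hypothesis \<open>\<Sigma>\<^sub>g\<^sub>h/2 + T \<succeq> 0\<close> absorbs the curvature term of the gradient bound\<close>
  moreover have "0 \<le> qnorm Sgh s / 2 + qnorm T s"
    using c4 by (simp add: psd_op_def qnorm_op_add qnorm_op_scaleR)
  moreover have "qnorm Gg s = qnorm Sgh s + qnorm T s" by (rule qnorm_op_add)
  moreover have "(\<tau> - 1) * \<sigma> * (r (Suc j) \<bullet> b) = \<tau> * \<sigma> * (r (Suc j) \<bullet> b) - \<sigma> * (r (Suc j) \<bullet> b)"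
    by (simp add: algebra_simps)
  ultimately have "\<sigma> * (r (Suc (Suc j)) \<bullet> b) + (\<tau> - 1) * \<sigma> * (r (Suc j) \<bullet> b)
    \<le> (qnorm Gg (Y0 - Ym) - qnorm Gg (Y1 - Y0)) / 2"
    by (simp only: inner_minus_right mult_minus_right) argo
  then show ?thesis by (simp only: Ym_def Y0_def Y1_def)
qed

lemma neg_qnorm_S_Sf_le:
  assumes "At d = a - b"
  shows "- (qnorm S d / 2 + qnorm Sf d / 4) \<le> (1 - \<alpha>) * \<sigma> / 2 * ((norm a)\<^sup>2 + (norm b)\<^sup>2)"
proof -
  have "(norm (At d))\<^sup>2 \<le> 2 * (norm a)\<^sup>2 + 2 * (norm b)\<^sup>2" using assms by (simp add: power2_norm_diff_le)
  moreover have "0 \<le> (1 - \<alpha>) * \<sigma> / 2" using alpha(2) sigma by simp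
  ultimately have "(1 - \<alpha>) * \<sigma> / 2 * (norm (At d))\<^sup>2 \<le> (1 - \<alpha>) * \<sigma> / 2 * (2 * (norm a)\<^sup>2 + 2 * (norm b)\<^sup>2)"
    by (rule mult_left_mono)
  moreover have "0 \<le> qnorm Sf d / 2 + qnorm S d + (1 - \<alpha>) * \<sigma> / 2 * (norm (At d))\<^sup>2"
    using c2 by (simp add: psd_op_def qnorm_op_add qnorm_op_scaleR qnorm_adjoint_comp[OF linA])
  moreover have "(1 - \<alpha>) * \<sigma> / 2 * (2 * (norm a)\<^sup>2 + 2 * (norm b)\<^sup>2) = 2 * ((1 - \<alpha>) * \<sigma> / 2 * ((norm a)\<^sup>2 + (norm b)\<^sup>2))"
    by (simp add: algebra_simps)
  ultimately show ?thesis by linarith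
qed

lemma neg_qnorm_T_Sg_le: "- (qnorm T d / 2 + qnorm Sg d / 4) \<le> m * \<alpha> * \<sigma> / 2 * (norm (Bt d))\<^sup>2"
proof -
  have "0 \<le> qnorm (\<lambda>v. (1/2) *\<^sub>R Sg v + T v + (m * \<alpha> * \<sigma>) *\<^sub>R B (Bt v)) d"
    using pd_op_imp_psd_op[OF c5] by (simp add: psd_op_def m_def)
  then show ?thesis by (simp add: qnorm_op_add qnorm_op_scaleR qnorm_adjoint_comp[OF linB])
qed

lemma Gap_le_proximal_terms:
  fixes j :: nat
  assumes u: "u \<in> edom p" and v: "v \<in> edom q"
  defines "X0 \<equiv> x (Suc j)" and "X1 \<equiv> x (Suc (Suc j))" and "Y0 \<equiv> y (Suc j)" and "Y1 \<equiv> y (Suc (Suc j))"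
  shows "Gap (Suc j) u v w
    \<le> (qnorm Gf (u - X0) - qnorm Gf (u - X1)) / 2 + (qnorm Gg (v - Y0) - qnorm Gg (v - Y1)) / 2
      - (qnorm S (X1 - X0) / 2 + qnorm Sf (X1 - X0) / 4) - (qnorm T (Y1 - Y0) / 2 + qnorm Sg (Y1 - Y0) / 4)
      + \<sigma> * ((At X1 - At u) \<bullet> Bt (Y1 - Y0)) + r (Suc (Suc j)) \<bullet> (w - zt (Suc j))"
proof -
  define Z0 r1 where "Z0 = z (Suc j)" and "r1 = r (Suc (Suc j))"
  have adj: "u \<bullet> A w = w \<bullet> At u" "v \<bullet> B w = w \<bullet> Bt v"
    using inner_A[of w u] inner_B[of w v] by (simp_all add: inner_commute)
  have "0 \<le> P u - P X1 + (gf X0 \<bullet> (u - X1) + (X1 - X0) \<bullet> Gf (u - X1) + Z0 \<bullet> At (u - X1)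
      + \<sigma> * ((At X1 + Bt Y0 - c) \<bullet> At (u - X1)))"
    using x_step_variational_ineq[OF u, of "Suc j"] by (simp add: X0_def X1_def Y0_def Z0_def)
  moreover have "0 \<le> Q v - Q Y1 + (gg Y0 \<bullet> (v - Y1) + (Y1 - Y0) \<bullet> Gg (v - Y1) + Z0 \<bullet> Bt (v - Y1)
      + \<sigma> * (r1 \<bullet> Bt (v - Y1)))"
    using y_step_variational_ineq[OF v, of "Suc j"] by (simp add: Y0_def Y1_def Z0_def r1_def)
  moreover note majorized_prox_three_point[OF f_maj ops(1) Sig_psd(1) ops(2) ops(5), of X0 u X1]
    majorized_prox_three_point[OF g_maj ops(3) Sig_psd(2) ops(4) ops(6), of Y0 v Y1]
  \<comment> \<open>the multiplier terms of both subproblems recombine into the ones of the gap\<close>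
  moreover have "(X1 - u) \<bullet> A w + (Y1 - v) \<bullet> B w + (zt (Suc j) - w) \<bullet> (- (At u + Bt v - c))
      + Z0 \<bullet> At (u - X1) + \<sigma> * ((At X1 + Bt Y0 - c) \<bullet> At (u - X1)) + Z0 \<bullet> Bt (v - Y1) + \<sigma> * (r1 \<bullet> Bt (v - Y1))
    = \<sigma> * ((At X1 - At u) \<bullet> Bt (Y1 - Y0)) + r1 \<bullet> (w - zt (Suc j))"
    by (simp add: inner_A inner_B zt_def Z0_def r1_def r_def X1_def Y1_def linear_diff[OF linear_At]
        linear_diff[OF linear_Bt] inner_diff_left inner_diff_right inner_add_left inner_add_right
        inner_commute algebra_simps adj)
  moreover have "Gap (Suc j) u v w = P X1 + Q Y1 - P u - Q v - (u - X1) \<bullet> gf u - (v - Y1) \<bullet> gg v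
      + ((X1 - u) \<bullet> A w + (Y1 - v) \<bullet> B w + (zt (Suc j) - w) \<bullet> (- (At u + Bt v - c)))"
    by (simp add: Gap_def vi_term_def X1_def Y1_def inner_add_right inner_diff_left)
  ultimately show ?thesis unfolding r1_def by argo
qed

lemma Gap_le_residual_terms:
  fixes j :: nat
  assumes u: "u \<in> edom p" and v: "v \<in> edom q"
  defines "X0 \<equiv> x (Suc j)" and "X1 \<equiv> x (Suc (Suc j))" and "Y0 \<equiv> y (Suc j)" and "Y1 \<equiv> y (Suc (Suc j))"
    and "r0 \<equiv> r (Suc j)" and "r1 \<equiv> r (Suc (Suc j))" and "b \<equiv> Bt (y (Suc (Suc j)) - y (Suc j))"
  shows "Gap (Suc j) u v w
    \<le> ((norm (z (Suc j) - w))\<^sup>2 - (norm (z (Suc (Suc j)) - w))\<^sup>2) / (2 * \<tau> * \<sigma>)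
      + (qnorm Gf (u - X0) - qnorm Gf (u - X1)) / 2 + (qnorm Gg (v - Y0) - qnorm Gg (v - Y1)) / 2
      + \<sigma> / 2 * ((norm (At u + Bt Y0 - c))\<^sup>2 - (norm (At u + Bt Y1 - c))\<^sup>2)
      + (1 - \<alpha>) * \<sigma> / 2 * (norm r0)\<^sup>2 + (\<tau> - 1 - \<alpha>) * \<sigma> / 2 * (norm r1)\<^sup>2
      + \<alpha> * \<sigma> * (r1 \<bullet> b) - \<alpha> * (1 - m) * \<sigma> / 2 * (norm b)\<^sup>2"
proof -
  define a where "a = At X1 + Bt Y0 - c"
  have b: "b = Bt Y1 - Bt Y0" by (simp add: b_def Y0_def Y1_def linear_diff[OF linear_Bt])
  have "\<sigma> * ((At X1 - At u) \<bullet> b)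
      = \<sigma> / 2 * ((norm r1)\<^sup>2 - (norm a)\<^sup>2 - (norm (At u + Bt Y1 - c))\<^sup>2 + (norm (At u + Bt Y0 - c))\<^sup>2)"
    using inner_diff_diff_eq_power2_norms[of "At X1" "At u" "Bt Y1" "Bt Y0" c]
    by (simp add: b r1_def r_def a_def X1_def Y1_def)
  moreover have "r1 \<bullet> (w - zt (Suc j))
      = ((norm (z (Suc j) - w))\<^sup>2 - (norm (z (Suc (Suc j)) - w))\<^sup>2) / (2 * \<tau> * \<sigma>) + (\<tau> * \<sigma> / 2 - \<sigma>) * (norm r1)\<^sup>2"
    using dual_step_identity[of "z (Suc (Suc j))" "z (Suc j)" \<tau> \<sigma> r1 w] zstep[of "Suc j"] sigma tau_pos
    by (simp add: zt_def r1_def r_def)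
  moreover have "- (qnorm S (X1 - X0) / 2 + qnorm Sf (X1 - X0) / 4) \<le> (1 - \<alpha>) * \<sigma> / 2 * ((norm a)\<^sup>2 + (norm r0)\<^sup>2)"
    by (rule neg_qnorm_S_Sf_le) (simp add: a_def r0_def r_def X0_def Y0_def linear_diff[OF linear_At])
  moreover have "- (qnorm T (Y1 - Y0) / 2 + qnorm Sg (Y1 - Y0) / 4) \<le> m * \<alpha> * \<sigma> / 2 * (norm b)\<^sup>2"
    using neg_qnorm_T_Sg_le by (simp add: b_def Y0_def Y1_def)
  moreover have na: "(norm a)\<^sup>2 = (norm r1)\<^sup>2 - 2 * (r1 \<bullet> b) + (norm b)\<^sup>2"
    using power2_norm_diff[of r1 b] by (simp add: a_def b r1_def r_def X1_def Y1_def algebra_simps)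
  have "\<sigma> / 2 * ((norm r1)\<^sup>2 - (norm a)\<^sup>2 - (norm (At u + Bt Y1 - c))\<^sup>2 + (norm (At u + Bt Y0 - c))\<^sup>2)
      + (\<tau> * \<sigma> / 2 - \<sigma>) * (norm r1)\<^sup>2 + (1 - \<alpha>) * \<sigma> / 2 * ((norm a)\<^sup>2 + (norm r0)\<^sup>2)
      + m * \<alpha> * \<sigma> / 2 * (norm b)\<^sup>2
    = \<sigma> / 2 * ((norm (At u + Bt Y0 - c))\<^sup>2 - (norm (At u + Bt Y1 - c))\<^sup>2)
      + (1 - \<alpha>) * \<sigma> / 2 * (norm r0)\<^sup>2 + (\<tau> - 1 - \<alpha>) * \<sigma> / 2 * (norm r1)\<^sup>2
      + \<alpha> * \<sigma> * (r1 \<bullet> b) - \<alpha> * (1 - m) * \<sigma> / 2 * (norm b)\<^sup>2"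
    unfolding na by (simp add: field_simps)
  ultimately show ?thesis
    using Gap_le_proximal_terms[OF u v, of j w] unfolding X0_def X1_def Y0_def Y1_def b_def r1_def
    by linarith
qed

lemma Gap_le_Psi_diff:
  assumes u: "u \<in> edom p" and v: "v \<in> edom q"
  shows "Gap (Suc j) u v w \<le> Psi j u v w - Psi (Suc j) u v w"
proof -
  define r0 r1 b where "r0 = r (Suc j)" and "r1 = r (Suc (Suc j))" and "b = Bt (y (Suc (Suc j)) - y (Suc j))"
  define GE GF where "GE = qnorm Gg (y (Suc j) - y j)" and "GF = qnorm Gg (y (Suc (Suc j)) - y (Suc j))"
  define Qf where "Qf = (2 * \<alpha> - \<tau>) * (norm r0)\<^sup>2 + 2 * (\<alpha> * (\<tau> - 1)) * (r0 \<bullet> b) + \<alpha> * (1 - m) * (norm b)\<^sup>2"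
  have par: "0 < \<alpha>" "0 < 2 * \<alpha> - \<tau>" "(\<alpha> * (\<tau> - 1))\<^sup>2 \<le> (2 * \<alpha> - \<tau>) * (\<alpha> * (1 - m))"
    using ipadmm_parameter_bounds[OF tau_pos alpha] by (simp_all add: m_def)
  have "\<alpha> * (\<sigma> * (r1 \<bullet> b) + (\<tau> - 1) * \<sigma> * (r0 \<bullet> b)) \<le> \<alpha> * ((GE - GF) / 2)"
    using y_step_monotone[of j] par(1) by (intro mult_left_mono) (simp_all add: r0_def r1_def b_def GE_def GF_def)
  moreover have "0 \<le> \<sigma> / 2 * Qf"
    using inner_quadratic_form_nonneg[OF par(2,3), of r0 b] sigma by (simp add: Qf_def)
  \<comment> \<open>the bookkeeping identity behind the choice of \<open>Psi\<close>\<close>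
  moreover have "(1 - \<alpha>) * \<sigma> / 2 * (norm r0)\<^sup>2 + (\<tau> - 1 - \<alpha>) * \<sigma> / 2 * (norm r1)\<^sup>2
      + \<alpha> * \<sigma> * (r1 \<bullet> b) - \<alpha> * (1 - m) * \<sigma> / 2 * (norm b)\<^sup>2
    = (\<alpha> + 1 - \<tau>) * \<sigma> / 2 * ((norm r0)\<^sup>2 - (norm r1)\<^sup>2) + \<alpha> / 2 * (GE - GF)
      - \<sigma> / 2 * Qf - (\<alpha> * ((GE - GF) / 2) - \<alpha> * (\<sigma> * (r1 \<bullet> b) + (\<tau> - 1) * \<sigma> * (r0 \<bullet> b)))"
    unfolding Qf_def by (simp add: field_simps)
  moreover have "Psi j u v w - Psi (Suc j) u v w
    = ((norm (z (Suc j) - w))\<^sup>2 - (norm (z (Suc (Suc j)) - w))\<^sup>2) / (2 * \<tau> * \<sigma>)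
      + (qnorm Gf (u - x (Suc j)) - qnorm Gf (u - x (Suc (Suc j)))) / 2
      + (qnorm Gg (v - y (Suc j)) - qnorm Gg (v - y (Suc (Suc j)))) / 2
      + \<sigma> / 2 * ((norm (At u + Bt (y (Suc j)) - c))\<^sup>2 - (norm (At u + Bt (y (Suc (Suc j))) - c))\<^sup>2)
      + (\<alpha> + 1 - \<tau>) * \<sigma> / 2 * ((norm r0)\<^sup>2 - (norm r1)\<^sup>2) + \<alpha> / 2 * (GE - GF)"
    by (simp add: Psi_def r0_def r1_def GE_def GF_def diff_divide_distrib algebra_simps)
  ultimately show ?thesis
    using Gap_le_residual_terms[OF u v, of j w] unfolding r0_def r1_def b_def by linarith
qed

lemma sum_Gap_le_Psi:
  assumes "u \<in> edom p" "v \<in> edom q"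
  shows "(\<Sum>j<k. Gap (Suc j) u v w) \<le> Psi 0 u v w - Psi k u v w"
proof (induction k)
  case (Suc k)
  then show ?case using Gap_le_Psi_diff[OF assms, of k w] by simp
qed simp

lemma Psi_ge:
  shows "(norm (z (Suc j) - w))\<^sup>2 / (2 * \<tau> * \<sigma>) \<le> Psi j u v w"
    and "qnorm Gf (u - x (Suc j)) / 2 \<le> Psi j u v w"
    and "qnorm Gg (v - y (Suc j)) / 2 + \<sigma> / 2 * (norm (At u + Bt (y (Suc j)) - c))\<^sup>2 \<le> Psi j u v w"
    and "0 \<le> Psi j u v w"
proof -
  have "0 \<le> \<alpha>" "0 \<le> \<alpha> + 1 - \<tau>" using ipadmm_parameter_bounds[OF tau_pos alpha] by simp_all
  then have "0 \<le> (norm (z (Suc j) - w))\<^sup>2 / (2 * \<tau> * \<sigma>)" "0 \<le> qnorm Gf (u - x (Suc j)) / 2"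
    "0 \<le> qnorm Gg (v - y (Suc j)) / 2" "0 \<le> \<sigma> / 2 * (norm (At u + Bt (y (Suc j)) - c))\<^sup>2"
    "0 \<le> (\<alpha> + 1 - \<tau>) * \<sigma> / 2 * (norm (r (Suc j)))\<^sup>2" "0 \<le> \<alpha> / 2 * qnorm Gg (y (Suc j) - y j)"
    using tau_pos sigma psd_Gf psd_Gg by simp_all
  then show "(norm (z (Suc j) - w))\<^sup>2 / (2 * \<tau> * \<sigma>) \<le> Psi j u v w"
    and "qnorm Gf (u - x (Suc j)) / 2 \<le> Psi j u v w"
    and "qnorm Gg (v - y (Suc j)) / 2 + \<sigma> / 2 * (norm (At u + Bt (y (Suc j)) - c))\<^sup>2 \<le> Psi j u v w"
    and "0 \<le> Psi j u v w"
    unfolding Psi_def by linarith+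
qed

lemma Psi_kkt_le:
  assumes "kkt_point xs ys zs"
  shows "Psi j xs ys zs \<le> Psi 0 xs ys zs"
proof -
  have feasible: "At xs + Bt ys - c = 0" using assms by (simp add: kkt_point_def)
  have "0 \<le> Gap k xs ys zs" for k
  proof -
    have "(x (Suc k) - xs) \<bullet> A zs = zs \<bullet> At (x (Suc k) - xs)" "(y (Suc k) - ys) \<bullet> B zs = zs \<bullet> Bt (y (Suc k) - ys)"
      using inner_A[of zs "x (Suc k) - xs"] inner_B[of zs "y (Suc k) - ys"] by (simp_all add: inner_commute)
    then have "vi_term xs ys zs (x (Suc k)) (y (Suc k)) (zt k)
        = gf xs \<bullet> (x (Suc k) - xs) + zs \<bullet> At (x (Suc k) - xs) + gg ys \<bullet> (y (Suc k) - ys) + zs \<bullet> Bt (y (Suc k) - ys)"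
      unfolding vi_term_def feasible by (simp add: inner_add_right inner_commute)
    moreover have "0 \<le> P (x (Suc k)) - P xs + gf xs \<bullet> (x (Suc k) - xs) + zs \<bullet> At (x (Suc k) - xs)"
      "0 \<le> Q (y (Suc k)) - Q ys + gg ys \<bullet> (y (Suc k) - ys) + zs \<bullet> Bt (y (Suc k) - ys)"
      using assms x_in_edom y_in_edom unfolding kkt_point_def by blast+
    ultimately show ?thesis by (simp add: Gap_def)
  qed
  then have "0 \<le> (\<Sum>i<j. Gap (Suc i) xs ys zs)" by (simp add: sum_nonneg)
  then show ?thesis using sum_Gap_le_Psi[of xs ys zs j] assms by (simp add: kkt_point_def)
qed

lemma bounded_z: "bounded (range z)"
proof -
  obtain xs ys zs where kkt: "kkt_point xs ys zs" by (rule kkt_point_exists)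
  have "(norm (z (Suc j) - zs))\<^sup>2 \<le> 2 * \<tau> * \<sigma> * Psi 0 xs ys zs" for j
  proof -
    have "(norm (z (Suc j) - zs))\<^sup>2 / (2 * \<tau> * \<sigma>) \<le> Psi 0 xs ys zs"
      using Psi_ge(1)[of j zs xs ys] Psi_kkt_le[OF kkt, of j] by linarith
    then show ?thesis using tau_pos sigma by (simp add: pos_divide_le_eq mult.commute)
  qed
  then show ?thesis by (rule bounded_range_Suc[OF bounded_range_if_power2_norm_le])
qed

lemma bounded_r: "bounded (range r)"
proof -
  obtain R where R: "\<And>j. norm (z j) \<le> R" using bounded_z unfolding bounded_iff by blast
  have "(\<tau> * \<sigma>) * norm (r (Suc j)) \<le> 2 * R" for j
    using zstep[of j] norm_triangle_ineq4[of "z (Suc j)" "z j"] R[of j] R[of "Suc j"] tau_pos sigma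
    by (simp add: r_def)
  then have "norm (r (Suc j)) \<le> 2 * R / (\<tau> * \<sigma>)" for j
    using tau_pos sigma by (simp add: pos_le_divide_eq mult.commute)
  then have "bounded (range (\<lambda>j. r (Suc j)))" unfolding bounded_iff by blast
  then show ?thesis by (rule bounded_range_Suc)
qed

lemma bounded_y: "bounded (range y)"
proof -
  obtain xs ys zs where kkt: "kkt_point xs ys zs" by (rule kkt_point_exists)
  then have feasible: "At xs + Bt ys = c" by (simp add: kkt_point_def)
  define Mg where "Mg v = (1/2) *\<^sub>R Sg v + T v + (m * \<alpha> * \<sigma>) *\<^sub>R B (Bt v)" for v
  have "linear Mg" unfolding Mg_def
    using ops(3,6) linB linear_Bt by (intro linear_compose_add linear_compose_scale_right
        linear_compose[unfolded o_def, of Bt B]) (auto simp: self_adjoint_op_linear)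
  then obtain \<kappa> where \<kappa>: "\<kappa> > 0" "\<And>d. \<kappa> * (norm d)\<^sup>2 \<le> qnorm Mg d"
    using pd_op_coercive c5 unfolding Mg_def m_def by blast
  have "(norm (y (Suc j) - ys))\<^sup>2 \<le> 2 * Psi 0 xs ys zs / \<kappa>" for j
  proof -
    define d where "d = y (Suc j) - ys"
    have "At xs + Bt (y (Suc j)) - c = Bt d"
      by (simp add: d_def linear_diff[OF linear_Bt] flip: feasible)
    moreover have "qnorm Gg (ys - y (Suc j)) = qnorm Gg d"
      using qnorm_minus_commute[OF self_adjoint_op_linear[OF self_adjoint_Gg]] by (simp add: d_def)
    ultimately have "qnorm Gg d / 2 + \<sigma> / 2 * (norm (Bt d))\<^sup>2 \<le> Psi 0 xs ys zs"
      using Psi_ge(3)[of ys j xs zs] Psi_kkt_le[OF kkt, of j] by simp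
    moreover have "qnorm Sg d \<le> qnorm Sgh d" "0 \<le> qnorm Sg d"
      using psd_op_le[OF Sig_psd(4)] Sig_psd(2) by (simp_all add: psd_op_def)
    moreover have "m * \<alpha> * \<sigma> * (norm (Bt d))\<^sup>2 \<le> \<sigma> * (norm (Bt d))\<^sup>2"
      using ipadmm_parameter_bounds(4)[OF tau_pos alpha] sigma
      by (intro mult_right_mono) (simp_all add: m_def mult_right_le_one_le)
    moreover have "qnorm Mg d = qnorm Sg d / 2 + qnorm T d + m * \<alpha> * \<sigma> * (norm (Bt d))\<^sup>2"
      unfolding Mg_def[abs_def] by (simp add: qnorm_op_add qnorm_op_scaleR qnorm_adjoint_comp[OF linB])
    ultimately have "qnorm Mg d \<le> 2 * Psi 0 xs ys zs" by (simp add: qnorm_op_add) argo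
    then have "\<kappa> * (norm d)\<^sup>2 \<le> 2 * Psi 0 xs ys zs" using \<kappa>(2)[of d] by linarith
    then show ?thesis using \<kappa>(1) by (simp add: d_def pos_le_divide_eq mult.commute)
  qed
  then show ?thesis by (rule bounded_range_Suc[OF bounded_range_if_power2_norm_le])
qed

lemma bounded_x: "bounded (range x)"
proof -
  obtain xs ys zs where kkt: "kkt_point xs ys zs" by (rule kkt_point_exists)
  then have feasible: "At xs + Bt ys = c" by (simp add: kkt_point_def)
  define Mf where "Mf u = (1/2) *\<^sub>R Sf u + S u + \<sigma> *\<^sub>R A (At u)" for u
  have "linear Mf" unfolding Mf_def
    using ops(1,5) linA linear_At by (intro linear_compose_add linear_compose_scale_right
        linear_compose[unfolded o_def, of At A]) (auto simp: self_adjoint_op_linear)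
  then obtain \<kappa> where \<kappa>: "\<kappa> > 0" "\<And>d. \<kappa> * (norm d)\<^sup>2 \<le> qnorm Mf d"
    using pd_op_coercive c3 unfolding Mf_def by blast
  obtain Rr where Rr: "\<And>j. norm (r j) \<le> Rr" using bounded_r unfolding bounded_iff by blast
  obtain Ry where Ry: "\<And>j. norm (y j - ys) \<le> Ry"
    using bounded_y bounded_translation[of "range y" "- ys"] unfolding bounded_iff by auto
  obtain KB where KB: "KB > 0" "\<And>d. norm (Bt d) \<le> KB * norm d" using linear_bounded_pos[OF linear_Bt] by blast
  define Ra where "Ra = Rr + KB * Ry"
  have "(norm (x (Suc j) - xs))\<^sup>2 \<le> (2 * Psi 0 xs ys zs + \<sigma> * Ra\<^sup>2) / \<kappa>" for j
  proof -
    define d where "d = x (Suc j) - xs"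
    have "qnorm Gf (xs - x (Suc j)) = qnorm Gf d"
      using qnorm_minus_commute[OF self_adjoint_op_linear[OF self_adjoint_Gf]] by (simp add: d_def)
    then have "qnorm Gf d \<le> 2 * Psi 0 xs ys zs"
      using Psi_ge(2)[of xs j ys zs] Psi_kkt_le[OF kkt, of j] by simp
    \<comment> \<open>the residual \<open>r\<close> and the bounded \<open>y\<close>-iterates control \<open>A\<^sup>* d\<close>\<close>
    moreover have "norm (At d) \<le> Ra"
    proof -
      have "r (Suc j) = At (x (Suc j)) + Bt (y (Suc j)) - (At xs + Bt ys)"
        using feasible by (simp add: r_def)
      then have "At d = r (Suc j) - Bt (y (Suc j) - ys)"
        by (simp add: d_def linear_diff[OF linear_At] linear_diff[OF linear_Bt] algebra_simps)
      then have "norm (At d) \<le> norm (r (Suc j)) + KB * norm (y (Suc j) - ys)"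
        using norm_triangle_ineq4[of "r (Suc j)" "Bt (y (Suc j) - ys)"] KB(2)[of "y (Suc j) - ys"] by simp
      moreover have "KB * norm (y (Suc j) - ys) \<le> KB * Ry" using KB(1) Ry[of "Suc j"] by simp
      ultimately show ?thesis using Rr[of "Suc j"] by (simp add: Ra_def)
    qed
    then have "\<sigma> * (norm (At d))\<^sup>2 \<le> \<sigma> * Ra\<^sup>2" using sigma by (simp add: power_mono)
    moreover have "qnorm Sf d \<le> qnorm Sfh d" "0 \<le> qnorm Sf d"
      using psd_op_le[OF Sig_psd(3)] Sig_psd(1) by (simp_all add: psd_op_def)
    moreover have "qnorm Mf d = qnorm Sf d / 2 + qnorm S d + \<sigma> * (norm (At d))\<^sup>2"
      unfolding Mf_def[abs_def] by (simp add: qnorm_op_add qnorm_op_scaleR qnorm_adjoint_comp[OF linA])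
    ultimately have "qnorm Mf d \<le> 2 * Psi 0 xs ys zs + \<sigma> * Ra\<^sup>2" by (simp add: qnorm_op_add)
    then have "\<kappa> * (norm d)\<^sup>2 \<le> 2 * Psi 0 xs ys zs + \<sigma> * Ra\<^sup>2" using \<kappa>(2)[of d] by linarith
    then show ?thesis using \<kappa>(1) by (simp add: d_def pos_le_divide_eq mult.commute)
  qed
  then show ?thesis by (rule bounded_range_Suc[OF bounded_range_if_power2_norm_le])
qed

lemma Psi0_bounded:
  obtains C where "\<And>u v w. norm (u, v, w) \<le> \<rho> \<Longrightarrow> Psi 0 u v w \<le> C"
proof -
  have lin: "linear Sfh" "linear S" "linear Sgh" "linear T"
    using ops by (simp_all add: self_adjoint_op_linear)
  have "continuous_on (cball 0 \<rho>) (\<lambda>t. Psi 0 (fst t) (fst (snd t)) (snd (snd t)))"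
    unfolding Psi_def qnorm_def
    by (intro continuous_intros linear_continuous_on_compose[OF _ lin(1)] linear_continuous_on_compose[OF _ lin(2)]
        linear_continuous_on_compose[OF _ lin(3)] linear_continuous_on_compose[OF _ lin(4)]
        linear_continuous_on_compose[OF _ linear_At]) (use tau_pos sigma in auto)
  then have "bounded ((\<lambda>t. Psi 0 (fst t) (fst (snd t)) (snd (snd t))) ` cball 0 \<rho>)"
    by (intro compact_imp_bounded compact_continuous_image) (simp_all add: compact_cball)
  then obtain C where "\<And>t. t \<in> cball 0 \<rho> \<Longrightarrow> norm (Psi 0 (fst t) (fst (snd t)) (snd (snd t))) \<le> C"
    unfolding bounded_iff by blast
  then have "Psi 0 u v w \<le> C" if "norm (u, v, w) \<le> \<rho>" for u v w
    using that by (metis abs_le_D1 real_norm_def mem_cball_0 fst_conv snd_conv)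
  then show ?thesis by (rule that)
qed

definition "x_erg k = (1 / real k) *\<^sub>R (\<Sum>i=1..k. x (Suc i))"
definition "y_erg k = (1 / real k) *\<^sub>R (\<Sum>i=1..k. y (Suc i))"
definition "z_erg k = (1 / real k) *\<^sub>R (\<Sum>i=1..k. zt i)"

lemma ergodic_bounded: obtains R where "\<And>k. 0 < k \<Longrightarrow> norm (x_erg k, y_erg k, z_erg k) \<le> R"
proof -
  obtain Rx Ry Rz Rr where "\<And>k. norm (x k) \<le> Rx" "\<And>k. norm (y k) \<le> Ry"
      "\<And>k. norm (z k) \<le> Rz" "\<And>k. norm (r k) \<le> Rr"
    using bounded_x bounded_y bounded_z bounded_r unfolding bounded_iff by (metis rangeI)
  then obtain R where R: "\<And>k. norm (x k) \<le> R" "\<And>k. norm (y k) \<le> R" "\<And>k. norm (z k) \<le> R" "\<And>k. norm (r k) \<le> R"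
    by (meson max.cobounded1 max.cobounded2 order_trans)
  have zt_bound: "norm (zt k) \<le> R + \<sigma> * R" for k
  proof -
    have "norm (\<sigma> *\<^sub>R r (Suc k)) \<le> \<sigma> * R"
      using mult_left_mono[OF R(4)[of "Suc k"] less_imp_le[OF sigma]] sigma by simp
    then show ?thesis using norm_triangle_ineq[of "z k" "\<sigma> *\<^sub>R r (Suc k)"] R(3)[of k]
      unfolding zt_def by linarith
  qed
  have zb: "norm (z_erg k) \<le> R + \<sigma> * R" if "0 < k" for k
    unfolding z_erg_def by (rule norm_average_le) (use that zt_bound in simp_all)
  have xyb: "norm (x_erg k) \<le> R" "norm (y_erg k) \<le> R" if "0 < k" for k
    unfolding x_erg_def y_erg_def by (rule norm_average_le; use that R in simp)+
  have "norm (x_erg k, y_erg k, z_erg k) \<le> R + R + (R + \<sigma> * R)" if "0 < k" for k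
    using norm_Pair_le[of "x_erg k" "(y_erg k, z_erg k)"] norm_Pair_le[of "y_erg k" "z_erg k"]
      xyb[OF that] zb[OF that] by linarith
  then show ?thesis by (rule that)
qed

lemma ergodic_gap_le:
  assumes k: "0 < k" and u: "u \<in> edom p" and v: "v \<in> edom q"
  shows "x_erg k \<in> edom p" "y_erg k \<in> edom q"
    and "P (x_erg k) + Q (y_erg k) + vi_term u v w (x_erg k) (y_erg k) (z_erg k) \<le> P u + Q v + Psi 0 u v w / k"
proof -
  have I: "finite {1..k}" "card {1..k} = k" by simp_all
  note avg_x = convex_on_average[OF convex_on_P I k, of "\<lambda>i. x (Suc i)", folded x_erg_def]
  note avg_y = convex_on_average[OF convex_on_Q I k, of "\<lambda>i. y (Suc i)", folded y_erg_def]
  show "x_erg k \<in> edom p" "y_erg k \<in> edom q" using avg_x(1) avg_y(1) x_in_edom y_in_edom by blast+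
  define SP SQ SV where "SP = (\<Sum>i=1..k. P (x (Suc i)))" and "SQ = (\<Sum>i=1..k. Q (y (Suc i)))"
    and "SV = (\<Sum>i=1..k. vi_term u v w (x (Suc i)) (y (Suc i)) (zt i))"
  have "vi_term u v w (x_erg k) (y_erg k) (z_erg k) = (1 / real k) * SV"
    unfolding vi_term_def x_erg_def y_erg_def z_erg_def SV_def inner_average_diff[OF I k]
    by (simp add: sum.distrib distrib_left)
  moreover have "SP + SQ + SV - real k * (P u + Q v) = (\<Sum>j<k. Gap (Suc j) u v w)"
    by (simp add: SP_def SQ_def SV_def Gap_def sum.distrib sum_subtractf sum.atLeast1_atMost_eq algebra_simps)
  then have "SP + SQ + SV \<le> Psi 0 u v w + real k * (P u + Q v)"
    using sum_Gap_le_Psi[OF u v, of w k] Psi_ge(4)[of k u v w] by linarith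
  then have "(SP + SQ + SV) / k \<le> (Psi 0 u v w + real k * (P u + Q v)) / k"
    using k by (simp add: divide_right_mono)
  then have "(1 / real k) * SP + (1 / real k) * SQ + (1 / real k) * SV \<le> Psi 0 u v w / k + (P u + Q v)"
    using k by (simp add: add_divide_distrib)
  ultimately show "P (x_erg k) + Q (y_erg k) + vi_term u v w (x_erg k) (y_erg k) (z_erg k) \<le> P u + Q v + Psi 0 u v w / k"
    using avg_x(2) avg_y(2) x_in_edom y_in_edom unfolding SP_def SQ_def by simp
qed

lemma ergodic_vi_gap_bound:
  "\<exists>D\<ge>0. \<forall>k>0. \<forall>u v w. norm ((u, v, w) - (x_erg k, y_erg k, z_erg k)) \<le> 1 \<longrightarrow>
     p (x_erg k) + q (y_erg k) + ereal (vi_term u v w (x_erg k) (y_erg k) (z_erg k))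
       \<le> p u + q v + ereal (D / (2 * real k))"
proof -
  obtain R where R: "\<And>k. 0 < k \<Longrightarrow> norm (x_erg k, y_erg k, z_erg k) \<le> R" using ergodic_bounded by blast
  obtain C where C: "\<And>u v w. norm (u, v, w) \<le> R + 1 \<Longrightarrow> Psi 0 u v w \<le> C" using Psi0_bounded by blast
  have "p (x_erg k) + q (y_erg k) + ereal (vi_term u v w (x_erg k) (y_erg k) (z_erg k))
      \<le> p u + q v + ereal (2 * max C 0 / (2 * real k))"
    if k: "0 < k" and near: "norm ((u, v, w) - (x_erg k, y_erg k, z_erg k)) \<le> 1" for k u v w
  proof (cases "u \<in> edom p \<and> v \<in> edom q")
    case True
    have "norm (u, v, w) \<le> R + 1"
      using norm_triangle_sub[of "(u, v, w)" "(x_erg k, y_erg k, z_erg k)"] R[OF k] near by simp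
    then have "Psi 0 u v w \<le> max C 0" using C by fastforce
    then have "Psi 0 u v w / k \<le> 2 * max C 0 / (2 * real k)" using k by (simp add: divide_right_mono)
    then show ?thesis
      using True ergodic_gap_le(1,2)[OF k, of u v] ergodic_gap_le(3)[OF k, of u v w] p_eq_P q_eq_Q by simp
  next
    case False
    then have "p u = \<infinity> \<or> q v = \<infinity>" by (auto simp: edom_def top.not_eq_extremum)
    then show ?thesis
      using closed_proper_convex_not_minf[OF p, of u] closed_proper_convex_not_minf[OF q, of v] by auto
  qed
  then show ?thesis by (intro exI[of _ "2 * max C 0"]) auto
qed

end

theorem theorem5p3:
  fixes p :: "'a::euclidean_space \<Rightarrow> ereal" and q :: "'b::euclidean_space \<Rightarrow> ereal"
    and f :: "'a \<Rightarrow> real" and g :: "'b \<Rightarrow> real"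
    and gf :: "'a \<Rightarrow> 'a" and gg :: "'b \<Rightarrow> 'b"
    and A :: "'c::euclidean_space \<Rightarrow> 'a" and B :: "'c \<Rightarrow> 'b" and c :: 'c
    and Sf Sfh S :: "'a \<Rightarrow> 'a" and Sg Sgh T :: "'b \<Rightarrow> 'b"
    and \<sigma> \<tau> \<alpha> :: real
    and x :: "nat \<Rightarrow> 'a" and y :: "nat \<Rightarrow> 'b" and z :: "nat \<Rightarrow> 'c"
  assumes p: "closed_proper_convex p" and q: "closed_proper_convex q"
    and f_cvx: "convex_on UNIV f" and f_grad: "\<And>u. (f has_derivative (\<lambda>h. gf u \<bullet> h)) (at u)"
    and f_lip: "\<exists>L. \<forall>u v. norm (gf u - gf v) \<le> L * norm (u - v)"
    and g_cvx: "convex_on UNIV g" and g_grad: "\<And>u. (g has_derivative (\<lambda>h. gg u \<bullet> h)) (at u)"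
    and g_lip: "\<exists>L. \<forall>u v. norm (gg u - gg v) \<le> L * norm (u - v)"
    and linA: "linear A" and linB: "linear B"
    and CQ: "\<exists>x0 y0. (x0, y0) \<in> rel_interior (edom p \<times> edom q) \<and> adjoint A x0 + adjoint B y0 = c"
    and sol: "\<exists>xs ys. adjoint A xs + adjoint B ys = c \<and>
               (\<forall>x' y'. adjoint A x' + adjoint B y' = c \<longrightarrow>
                  p xs + ereal (f xs) + q ys + ereal (g ys) \<le> p x' + ereal (f x') + q y' + ereal (g y'))"
    and ops: "self_adjoint_op Sf" "self_adjoint_op Sfh" "self_adjoint_op Sg" "self_adjoint_op Sgh"
             "self_adjoint_op S" "self_adjoint_op T"
    and Sig_psd: "psd_op Sf" "psd_op Sg" "psd_op (\<lambda>u. Sfh u - Sf u)" "psd_op (\<lambda>u. Sgh u - Sg u)"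
    and f_maj: "\<And>u v. f v + (u - v) \<bullet> gf v + qnorm Sf (u - v) / 2 \<le> f u"
               "\<And>u v. f u \<le> f v + (u - v) \<bullet> gf v + qnorm Sfh (u - v) / 2"
    and g_maj: "\<And>u v. g v + (u - v) \<bullet> gg v + qnorm Sg (u - v) / 2 \<le> g u"
               "\<And>u v. g u \<le> g v + (u - v) \<bullet> gg v + qnorm Sgh (u - v) / 2"
    and sigma: "\<sigma> > 0" and tau_pos: "\<tau> > 0"
    and alg_psd: "psd_op (\<lambda>u. Sfh u + S u + \<sigma> *\<^sub>R A (adjoint A u))"
                 "psd_op (\<lambda>u. Sgh u + T u + \<sigma> *\<^sub>R B (adjoint B u))"
    and init: "x 0 \<in> edom p" "y 0 \<in> edom q"
    and xstep: "\<And>k u.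
      p (x (Suc k)) + ereal (gf (x k) \<bullet> x (Suc k) + qnorm (\<lambda>v. Sfh v + S v) (x (Suc k) - x k) / 2
        + z k \<bullet> adjoint A (x (Suc k)) + \<sigma> / 2 * (norm (adjoint A (x (Suc k)) + adjoint B (y k) - c))\<^sup>2)
      \<le> p u + ereal (gf (x k) \<bullet> u + qnorm (\<lambda>v. Sfh v + S v) (u - x k) / 2
        + z k \<bullet> adjoint A u + \<sigma> / 2 * (norm (adjoint A u + adjoint B (y k) - c))\<^sup>2)"
    and ystep: "\<And>k v.
      q (y (Suc k)) + ereal (gg (y k) \<bullet> y (Suc k) + qnorm (\<lambda>w. Sgh w + T w) (y (Suc k) - y k) / 2
        + z k \<bullet> adjoint B (y (Suc k)) + \<sigma> / 2 * (norm (adjoint A (x (Suc k)) + adjoint B (y (Suc k)) - c))\<^sup>2)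
      \<le> q v + ereal (gg (y k) \<bullet> v + qnorm (\<lambda>w. Sgh w + T w) (v - y k) / 2
        + z k \<bullet> adjoint B v + \<sigma> / 2 * (norm (adjoint A (x (Suc k)) + adjoint B v - c))\<^sup>2)"
    and zstep: "\<And>k. z (Suc k) = z k + (\<tau> * \<sigma>) *\<^sub>R (adjoint A (x (Suc k)) + adjoint B (y (Suc k)) - c)"
    and tau_ub: "\<tau> < (1 + sqrt 5) / 2"
    and alpha: "\<tau> / min (1 + \<tau>) (1 + 1 / \<tau>) < \<alpha>" "\<alpha> \<le> 1"
    and c1: "psd_op (\<lambda>u. Sfh u + S u)"
    and c2: "psd_op (\<lambda>u. (1/2) *\<^sub>R Sf u + S u + ((1 - \<alpha>) * \<sigma> / 2) *\<^sub>R A (adjoint A u))"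
    and c3: "pd_op (\<lambda>u. (1/2) *\<^sub>R Sf u + S u + \<sigma> *\<^sub>R A (adjoint A u))"
    and c4: "psd_op (\<lambda>v. (1/2) *\<^sub>R Sgh v + T v)"
    and c5: "pd_op (\<lambda>v. (1/2) *\<^sub>R Sg v + T v + (min \<tau> (1 + \<tau> - \<tau>\<^sup>2) * \<alpha> * \<sigma>) *\<^sub>R B (adjoint B v))"
  shows "\<exists>D\<ge>0. \<forall>k\<ge>2. \<forall>u v w.
    (let xh = (1 / real k) *\<^sub>R (\<Sum>i=1..k. x (Suc i));
         yh = (1 / real k) *\<^sub>R (\<Sum>i=1..k. y (Suc i));
         zh = (1 / real k) *\<^sub>R (\<Sum>i=1..k. z i + \<sigma> *\<^sub>R (adjoint A (x (Suc i)) + adjoint B (y (Suc i)) - c))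
     in norm ((u, v, w) - (xh, yh, zh)) \<le> 1 \<longrightarrow>
        p xh + q yh + ereal ((xh - u) \<bullet> (gf u + A w) + (yh - v) \<bullet> (gg v + B w)
                             + (zh - w) \<bullet> (- (adjoint A u + adjoint B v - c)))
        \<le> p u + q v + ereal (D / (2 * real k)))"
proof -
  interpret majorized_ipadmm p q f g gf gg A B c Sf Sfh S Sg Sgh T \<sigma> \<tau> \<alpha> x y z
    by (rule majorized_ipadmm.intro) (rule assms)+
  have "z_erg k = (1 / real k) *\<^sub>R (\<Sum>i=1..k. z i + \<sigma> *\<^sub>R (adjoint A (x (Suc i)) + adjoint B (y (Suc i)) - c))"
    for k by (simp add: z_erg_def zt_def r_def)
  then show ?thesis
    using ergodic_vi_gap_bound unfolding Let_def x_erg_def[symmetric] y_erg_def[symmetric] vi_term_def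
    by (metis (no_types, lifting) not_numeral_le_zero not_gr_zero)
qed

end
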